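(* Let $\mathrm{char}(K)=0$ and $k\ge2$ an integer. Then $$\Big((1+x)\frac{d}{dx}\Big)\big(\mathrm{Log}_k(1+x)\big)=1.$$
   Context: Let $K$ be a field of characteristic $0$ and let $x\neq y$ be two symbols. A finite planar reduced rooted tree is a finite rooted tree in which the children of each vertex are linearly ordered and no vertex has exactly one child; its leaves are the vertices without children. $P(x,y)$ is the set of isomorphism classes of pairs $S=(T,\lambda)$, $T$ a finite planar reduced rooted tree, $\lambda:L(T)\to\{x,y\}$ a labeling of its leaves; $\deg_x(S)=\#\lambda^{-1}(x)$, $\deg S=\#L(T)$. $P'(x,y)=P(x,y)\cup\{1_P\}$ with $1_P$ the empty tree (degree 0). For $m\ge2$, $\bullet_m(S_1,\dots,S_m)$ is the tree with a new root whose ordered children are the roots of $S_1,\dots,S_m$, labelings inherited; on $P'(x,y)$ occurrences of $1_P$ are deleted, with $\bullet_1(S)=S$, $\bullet_0()=1_P$. $K\{\{x,y\}$: all $f=\sum_{S\in P'(x,y)}c_S(f)S$ such that for each $n$ only finitely many $S$ with $\deg_x(S)=n$ have $c_S(f)\ne0$; products $f_1\cdot\ldots\cdot f_m=\bullet_m(f_1,\dots,f_m)$ with $c_S(f_1\cdot\ldots\cdot f_m)=\sum_{\bullet_m(S_1,\dots,S_m)=S}c_{S_1}(f_1)\cdots c_{S_m}(f_m)$; $x$-adic topology from $\mathrm{ord}_x(f)=\min\{\deg_x S:c_S(f)\ne0\}$. $K\{\{x\}\}$: series supported on $1_P$ and trees with all leaves labeled $x$; we write $1=1_P$. For $g,h\in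 K\{\{x,y\}$ with $\mathrm{ord}_x(g)\ge1$, $\varphi_{(g,h)}$ denotes the unique $x$-adically continuous $K$-linear map preserving $1_P$ and all $\bullet_m$ with $x\mapsto g$, $y\mapsto h$; for $f\in K\{\{x\}\}$, $f(g(x))$ denotes $\varphi_{(g,h)}(f)$. The universal derivation $d:K\{\{x\}\}\to K\{\{x,y\}$ is the continuous $K$-linear map with $d(1_P)=0$ and, for a tree $S=(T,\lambda)$ with all leaves $l_1,\dots,l_m$ labeled $x$, $d(S)=\sum_{i=1}^m(T,\lambda^{(i)})$ with $\lambda^{(i)}$ labeling $l_i$ by $y$ and the other leaves by $x$. For $h\in K\{\{x\}\}$, $h\frac{d}{dx}:=\varphi_{(x,h)}\circ d$; in particular $(1+x)\frac{d}{dx}=\varphi_{(x,1+x)}\circ d$ and $\frac{d}{dx}=\varphi_{(x,1)}\circ d$. For an integer $k\ge2$, the $k$-ary planar exponential series $\mathrm{Exp}_k(x)=\sum_{n\ge0}f_n$ ($f_n$ supported on trees with $n$ leaves) is the unique series in $K\{\{x\}\}$ with $f_0=1$, $f_1=x$ and $k^nf_n=\sum_{i_1+\dots+i_k=n}f_{i_1}\cdot\ldots\cdot f_{i_k}$ ($k$-ary products) for all $n$. The $k$-ary planar logarithm $\mathrm{Log}_k(1+x)$ is the series $h\in K\{\{x\}\}$ with zero constant term (coefficient of $1_P$) which is inverse to $\mathrm{Exp}_k(x)-1$ under substitution: $h(\mathrm{Exp}_k(x)-1)=x$, i.e. $\mathrm{Log}_k(\mathrm{Exp}_k(x))=x$.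 *)

theory Defs
  imports Main
begin

datatype lbl = X | Y

datatype ptree = Lf lbl | Nd "ptree list"

fun wfT :: "ptree \<Rightarrow> bool" where
  "wfT (Lf _) = True"
| "wfT (Nd ts) = (length ts \<ge> 2 \<and> (\<forall>t\<in>set ts. wfT t))"

fun degxT :: "ptree \<Rightarrow> nat" where
  "degxT (Lf l) = (if l = X then 1 else 0)"
| "degxT (Nd ts) = sum_list (map degxT ts)"

fun degyT :: "ptree \<Rightarrow> nat" where
  "degyT (Lf l) = (if l = Y then 1 else 0)"
| "degyT (Nd ts) = sum_list (map degyT ts)"

fun degT :: "ptree \<Rightarrow> nat" where
  "degT (Lf _) = 1"
| "degT (Nd ts) = sum_list (map degT ts)"

fun allX :: "ptree \<Rightarrow> ptree" where
  "allX (Lf _) = Lf X"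
| "allX (Nd ts) = Nd (map allX ts)"

text \<open>Elements of P'(x,y): None is the empty tree 1_P.\<close>
definition degx :: "ptree option \<Rightarrow> nat" where
  "degx S = (case S of None \<Rightarrow> 0 | Some T \<Rightarrow> degxT T)"

definition deg :: "ptree option \<Rightarrow> nat" where
  "deg S = (case S of None \<Rightarrow> 0 | Some T \<Rightarrow> degT T)"

text \<open>The grafting operation bullet_m on P'(x,y) (occurrences of 1_P deleted).\<close>
definition bul :: "ptree option list \<Rightarrow> ptree option" where
  "bul ss = (case map the (filter (\<lambda>s. s \<noteq> None) ss) of
               [] \<Rightarrow> None
             | [t] \<Rightarrow> Some t
             | ts \<Rightarrow> Some (Nd ts))"

type_synonym 'a pser = "ptree option \<Rightarrow> 'a"

definition serxy :: "('a::zero) pser set" where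
  "serxy = {f. (\<forall>T. f (Some T) \<noteq> 0 \<longrightarrow> wfT T) \<and>
               (\<forall>n. finite {S. f S \<noteq> 0 \<and> degx S = n})}"

definition serx :: "('a::zero) pser set" where
  "serx = {f. f \<in> serxy \<and> (\<forall>T. f (Some T) \<noteq> 0 \<longrightarrow> degyT T = 0)}"

definition oneser :: "('a::{zero,one}) pser" where
  "oneser = (\<lambda>S. if S = None then 1 else 0)"

definition xser :: "('a::{zero,one}) pser" where
  "xser = (\<lambda>S. if S = Some (Lf X) then 1 else 0)"

definition prods :: "('a::comm_ring_1) pser list \<Rightarrow> 'a pser" where
  "prods fs S = (\<Sum>ss \<in> {ss. length ss = length fs \<and> bul ss = S}.
                   \<Prod>i<length fs. (fs ! i) (ss ! i))"

fun phiT :: "('a::comm_ring_1) pser \<Rightarrow> 'a pser \<Rightarrow> ptree \<Rightarrow> 'a pser" where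
  "phiT g h (Lf l) = (if l = X then g else h)"
| "phiT g h (Nd ts) = prods (map (phiT g h) ts)"

definition phiO :: "('a::comm_ring_1) pser \<Rightarrow> 'a pser \<Rightarrow> ptree option \<Rightarrow> 'a pser" where
  "phiO g h S = (case S of None \<Rightarrow> oneser | Some T \<Rightarrow> phiT g h T)"

text \<open>phi_(g,h)(f) = sum_S c_S(f) phi_(g,h)(S), the x-adically continuous extension
  (for ord_x g \<ge> 1 only trees S with deg_x S \<le> deg_x T contribute to the coefficient of T).\<close>
definition phi :: "('a::comm_ring_1) pser \<Rightarrow> 'a pser \<Rightarrow> 'a pser \<Rightarrow> 'a pser" where
  "phi g h f T = (\<Sum>S \<in> {S. f S \<noteq> 0 \<and> degx S \<le> degx T}. f S * phiO g h S T)"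

text \<open>Substitution f(g(x)) for f in K{{x}} (the value on y is irrelevant).\<close>
definition subst :: "('a::comm_ring_1) pser \<Rightarrow> 'a pser \<Rightarrow> 'a pser" where
  "subst f g = phi g (\<lambda>_. 0) f"

definition dser :: "('a::comm_ring_1) pser \<Rightarrow> 'a pser" where
  "dser f S = (case S of None \<Rightarrow> 0
                | Some T \<Rightarrow> (if degyT T = 1 then f (Some (allX T)) else 0))"

definition hder :: "('a::comm_ring_1) pser \<Rightarrow> 'a pser \<Rightarrow> 'a pser" where
  "hder h f = phi xser h (dser f)"

definition hpart :: "nat \<Rightarrow> ('a::zero) pser \<Rightarrow> 'a pser" where
  "hpart n E = (\<lambda>S. if deg S = n then E S else 0)"

definition Expk :: "nat \<Rightarrow> ('a::field_char_0) pser" where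
  "Expk k = (THE E. E \<in> serx \<and> hpart 0 E = oneser \<and> hpart 1 E = xser \<and>
     (\<forall>n. (\<lambda>S. of_nat (k ^ n) * hpart n E S) =
          (\<lambda>S. \<Sum>is \<in> {is. length is = k \<and> sum_list is = n}.
                  prods (map (\<lambda>i. hpart i E) is) S)))"

definition Logk :: "nat \<Rightarrow> ('a::field_char_0) pser" where
  "Logk k = (THE h. h \<in> serx \<and> h None = 0 \<and>
               subst h (\<lambda>S. Expk k S - oneser S) = xser)"

end

(*
  Exp_k is pinned down by the functional equation Exp_k(k x) = Exp_k(x) \<cdot> ... \<cdot> Exp_k(x)
  (k factors), which is what k^n f_n = \<Sum> f_i1 \<cdot> ... \<cdot> f_ik says degree by degree.  Applying
  d/dx to it, and using the Leibniz rule for the k-ary product, shows that D = Exp_k' - Exp_k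
  satisfies the linearized equation k^(n+1) D_n = \<Sum>_j (Exp_k, ..., D, ..., Exp_k) (D in slot j),
  whose only solution without constant term is 0; so Exp_k' = Exp_k.

  Log_k(1+x) is the compositional inverse L of g = Exp_k - 1.  Substituting g into (1+x) L'
  gives (1+g) \<cdot> (L' \<circ> g) = g' \<cdot> (L' \<circ> g), and by the chain rule d(L \<circ> g) = (dL) \<circ> (g, dg)
  this is the derivative of L \<circ> g = x, i.e. 1.  Since g = x + (terms of x-degree \<ge> 2),
  substituting g is unitriangular and hence injective, so (1+x) L' = 1.
*)

theory Submission
  imports Defs
begin

section \<open>Reduced planar trees and grafting\<close>

lemma degT_eq_degxT_add_degyT: "degT t = degxT t + degyT t"
proof (induction t)
  case (Lf l) then show ?case by (cases l) auto
next
  case (Nd ts)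
  then have "map degT ts = map (\<lambda>t. degxT t + degyT t) ts" by simp
  then show ?case by (simp only: degT.simps degxT.simps degyT.simps sum_list_addf)
qed

lemma degT_allX [simp]: "degT (allX t) = degT t"
  by (induction t) (auto cong: map_cong)

lemma degyT_allX [simp]: "degyT (allX t) = 0"
  by (induction t) (auto cong: map_cong)

lemma degxT_allX [simp]: "degxT (allX t) = degT t"
  by (induction t) (auto cong: map_cong)

lemma wfT_allX [simp]: "wfT (allX t) = wfT t"
  by (induction t) auto

lemma allX_eq_self: "degyT t = 0 \<Longrightarrow> allX t = t"
proof (induction t)
  case (Lf l) then show ?case by (cases l) auto
qed (auto simp: map_idI)

lemma degT_ge_1: "wfT t \<Longrightarrow> 1 \<le> degT t"
proof (induction t)
  case (Lf l) then show ?case by auto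
next
  case (Nd ts)
  then obtain a r where "ts = a # r" by (cases ts) auto
  with Nd show ?case by fastforce
qed

lemma length_le_sum_list_map:
  "(\<And>x. x \<in> set xs \<Longrightarrow> 1 \<le> f x) \<Longrightarrow> length xs \<le> (\<Sum>x\<leftarrow>xs. f x :: nat)"
  by (induction xs) fastforce+

lemma degT_Nd_ge_2: "wfT (Nd ts) \<Longrightarrow> 2 \<le> degT (Nd ts)"
  using length_le_sum_list_map[of ts degT] degT_ge_1 by auto

lemma degT_child_less: "wfT (Nd ts) \<Longrightarrow> t \<in> set ts \<Longrightarrow> degT t < degT (Nd ts)"
proof -
  assume w: "wfT (Nd ts)" and t: "t \<in> set ts"
  then obtain u where u: "u \<in> set (remove1 t ts)"
    by (cases "remove1 t ts") (auto simp: length_remove1 dest: arg_cong[of _ _ length])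
  then have "1 \<le> degT u" using w degT_ge_1 set_remove1_subset by fastforce
  moreover have "degT u \<le> sum_list (map degT (remove1 t ts))"
    using u by (simp add: member_le_sum_list)
  moreover have "degT (Nd ts) = degT t + sum_list (map degT (remove1 t ts))"
    using t by (simp add: sum_list_map_remove1)
  ultimately show ?thesis by linarith
qed

lemma finite_wfT_degT: "finite {t. wfT t \<and> degT t = n}"
proof (induction n rule: less_induct)
  case (less n)
  let ?A = "\<Union>j<n. {t. wfT t \<and> degT t = j}"
  have sub: "{t. wfT t \<and> degT t = n} \<subseteq> {Lf X, Lf Y} \<union> Nd ` {ts. set ts \<subseteq> ?A \<and> length ts \<le> n}"
  proof
    fix t assume t: "t \<in> {t. wfT t \<and> degT t = n}"
    show "t \<in> {Lf X, Lf Y} \<union> Nd ` {ts. set ts \<subseteq> ?A \<and> length ts \<le> n}"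
    proof (cases t)
      case (Lf l) then show ?thesis by (cases l) auto
    next
      case (Nd ts)
      have "set ts \<subseteq> ?A" using degT_child_less t Nd by auto
      moreover have "length ts \<le> n"
        using length_le_sum_list_map[of ts degT] t Nd degT_ge_1 by auto
      ultimately show ?thesis using Nd by auto
    qed
  qed
  have "finite ?A" using less by auto
  then have "finite ({Lf X, Lf Y} \<union> Nd ` {ts. set ts \<subseteq> ?A \<and> length ts \<le> n})"
    using finite_lists_length_le by blast
  with sub show ?case by (rule finite_subset)
qed

lemma finite_allX_vimage: "finite {t. allX t = u}"
proof (induction u)
  case (Lf l)
  have "{t. allX t = Lf l} \<subseteq> {Lf X, Lf Y}"
  proof
    fix t assume "t \<in> {t. allX t = Lf l}"
    then show "t \<in> {Lf X, Lf Y}" by (cases t; cases "case t of Lf m \<Rightarrow> m") auto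
  qed
  then show ?case by (rule finite_subset) simp
next
  case (Nd us)
  let ?B = "\<Union>u\<in>set us. {t. allX t = u}"
  have "{t. allX t = Nd us} \<subseteq> Nd ` {ts. set ts \<subseteq> ?B \<and> length ts = length us}"
  proof
    fix t assume "t \<in> {t. allX t = Nd us}"
    then obtain ts where "t = Nd ts" "map allX ts = us" by (cases t) auto
    then show "t \<in> Nd ` {ts. set ts \<subseteq> ?B \<and> length ts = length us}" by force
  qed
  moreover have "finite ?B" using Nd by auto
  ultimately show ?case using finite_lists_length_eq finite_subset by blast
qed

definition degy :: "ptree option \<Rightarrow> nat" where
  "degy S = (case S of None \<Rightarrow> 0 | Some T \<Rightarrow> degyT T)"

definition x_tree :: "ptree option \<Rightarrow> bool" where
  "x_tree S = (case S of None \<Rightarrow> True | Some T \<Rightarrow> wfT T \<and> degyT T = 0)"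

definition trees_of :: "ptree option list \<Rightarrow> ptree list" where
  "trees_of ss = map the (filter (\<lambda>s. s \<noteq> None) ss)"

lemma trees_of_simps [simp]:
  "trees_of [] = []" "trees_of (None # ss) = trees_of ss" "trees_of (Some t # ss) = t # trees_of ss"
  "trees_of (xs @ ys) = trees_of xs @ trees_of ys"
  "trees_of (s # ss) = (case s of None \<Rightarrow> trees_of ss | Some t \<Rightarrow> t # trees_of ss)"
  by (auto simp: trees_of_def split: option.splits)

lemma trees_of_map_Some [simp]: "trees_of (map Some ts) = ts"
  by (induction ts) auto

lemma trees_of_eq_Nil_iff: "trees_of ss = [] \<longleftrightarrow> (\<forall>s\<in>set ss. s = None)"
  by (induction ss) (auto split: option.splits)

lemma Some_in_set_iff_in_trees_of: "Some t \<in> set ss \<longleftrightarrow> t \<in> set (trees_of ss)"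
  by (induction ss) (auto split: option.splits)

lemma bul_eq_trees_of:
  "bul ss = (case trees_of ss of [] \<Rightarrow> None | [t] \<Rightarrow> Some t | ts \<Rightarrow> Some (Nd ts))"
  by (simp add: bul_def trees_of_def)

lemma bul_cases:
  obtains "trees_of ss = []" "bul ss = None"
  | t where "trees_of ss = [t]" "bul ss = Some t"
  | ts where "trees_of ss = ts" "2 \<le> length ts" "bul ss = Some (Nd ts)"
proof (cases "trees_of ss")
  case Nil then show ?thesis using that by (simp add: bul_eq_trees_of)
next
  case (Cons t r)
  then show ?thesis using that by (cases r) (auto simp: bul_eq_trees_of)
qed

lemma bul_eq_None_iff: "bul ss = None \<longleftrightarrow> trees_of ss = []"
  by (cases ss rule: bul_cases) auto

lemma bul_eq_SomeD:
  "bul ss = Some T \<Longrightarrow> trees_of ss = [T] \<or> (\<exists>ts. T = Nd ts \<and> 2 \<le> length ts \<and> trees_of ss = ts)"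
  by (cases ss rule: bul_cases) auto

lemma bul_singleton_tree: "trees_of ss = [T] \<Longrightarrow> bul ss = Some T"
  by (simp add: bul_eq_trees_of)

lemma bul_several_trees: "trees_of ss = ts \<Longrightarrow> 2 \<le> length ts \<Longrightarrow> bul ss = Some (Nd ts)"
  by (cases ss rule: bul_cases) auto

lemma bul_cong: "trees_of ss = trees_of ss' \<Longrightarrow> bul ss = bul ss'"
  by (simp add: bul_eq_trees_of)

lemma bul_single [simp]: "bul [s] = s"
  by (cases s) (auto simp: bul_eq_trees_of)

lemma degx_bul: "degx (bul ss) = (\<Sum>s\<leftarrow>ss. degx s)"
proof -
  have "(\<Sum>s\<leftarrow>ss. degx s) = (\<Sum>t\<leftarrow>trees_of ss. degxT t)"
    by (induction ss) (auto simp: degx_def split: option.splits)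
  then show ?thesis by (cases ss rule: bul_cases) (auto simp: degx_def)
qed

lemma deg_bul: "deg (bul ss) = (\<Sum>s\<leftarrow>ss. deg s)"
proof -
  have "(\<Sum>s\<leftarrow>ss. deg s) = (\<Sum>t\<leftarrow>trees_of ss. degT t)"
    by (induction ss) (auto simp: deg_def split: option.splits)
  then show ?thesis by (cases ss rule: bul_cases) (auto simp: deg_def)
qed

lemma degy_bul: "degy (bul ss) = (\<Sum>s\<leftarrow>ss. degy s)"
proof -
  have "(\<Sum>s\<leftarrow>ss. degy s) = (\<Sum>t\<leftarrow>trees_of ss. degyT t)"
    by (induction ss) (auto simp: degy_def split: option.splits)
  then show ?thesis by (cases ss rule: bul_cases) (auto simp: degy_def)
qed

lemma x_tree_bul: "(\<And>s. s \<in> set ss \<Longrightarrow> x_tree s) \<Longrightarrow> x_tree (bul ss)"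
proof (cases ss rule: bul_cases)
  case 1 then show ?thesis by (simp add: x_tree_def)
next
  case (2 t)
  assume "\<And>s. s \<in> set ss \<Longrightarrow> x_tree s"
  moreover have "Some t \<in> set ss" using 2 Some_in_set_iff_in_trees_of by simp
  ultimately show ?thesis using 2 by (force simp: x_tree_def)
next
  case (3 ts)
  assume "\<And>s. s \<in> set ss \<Longrightarrow> x_tree s"
  then have "\<forall>t\<in>set ts. wfT t \<and> degyT t = 0"
    using 3 Some_in_set_iff_in_trees_of by (force simp: x_tree_def)
  then show ?thesis using 3 by (simp add: x_tree_def)
qed

lemma x_tree_degx_eq_deg: "x_tree S \<Longrightarrow> degx S = deg S"
  by (cases S) (auto simp: x_tree_def degx_def deg_def degT_eq_degxT_add_degyT)

lemma x_tree_deg_ge_1: "x_tree S \<Longrightarrow> S \<noteq> None \<Longrightarrow> 1 \<le> deg S"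
  using degT_ge_1 by (cases S) (auto simp: x_tree_def deg_def)

definition fiber :: "nat \<Rightarrow> ptree option \<Rightarrow> ptree option list set" where
  "fiber m S = {ss. length ss = m \<and> bul ss = S}"

lemma degx_le_degx_bul: "ss \<in> fiber m S \<Longrightarrow> s \<in> set ss \<Longrightarrow> degx s \<le> degx S"
  by (auto simp: fiber_def degx_bul member_le_sum_list)

lemma finite_fiber: "finite (fiber m S)"
proof -
  define A where "A = insert None (Some ` (case S of None \<Rightarrow> {} | Some T \<Rightarrow>
     insert T (case T of Nd ts \<Rightarrow> set ts | _ \<Rightarrow> {})))"
  have "finite A" unfolding A_def by (auto split: option.splits ptree.splits)
  moreover have "set ss \<subseteq> A" if ss: "ss \<in> fiber m S" for ss
  proof
    fix s assume s: "s \<in> set ss"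
    show "s \<in> A"
    proof (cases s)
      case (Some t)
      then have t: "t \<in> set (trees_of ss)" using s Some_in_set_iff_in_trees_of by auto
      have "bul ss = S" using ss by (simp add: fiber_def)
      then show ?thesis using t Some by (cases ss rule: bul_cases) (auto simp: A_def)
    qed (simp add: A_def)
  qed
  ultimately show ?thesis
    by (intro finite_subset[OF _ finite_lists_length_eq[of A m]]) (auto simp: fiber_def)
qed

lemma fiber_0: "fiber 0 S = (if S = None then {[]} else {})"
  by (auto simp: fiber_def bul_eq_trees_of)

lemma fiber_1: "fiber (Suc 0) S = {[S]}"
  by (auto simp: fiber_def length_Suc_conv)

lemma fiber_None: "fiber k None = {replicate k None}"
  by (auto simp: fiber_def bul_eq_None_iff trees_of_eq_Nil_iff replicate_length_same
           intro: replicate_length_same[symmetric])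

section \<open>Products of series\<close>

lemma prods_eq_sum_fiber:
  "prods fs S = (\<Sum>ss\<in>fiber (length fs) S. \<Prod>i<length fs. (fs!i) (ss!i))"
  unfolding prods_def fiber_def by simp

lemma prods_map_eq_sum_fiber:
  "prods (map f xs) S = (\<Sum>ss\<in>fiber (length xs) S. \<Prod>i<length xs. f (xs!i) (ss!i))"
  unfolding prods_eq_sum_fiber by (auto intro!: sum.cong prod.cong)

lemma prods_Nil [simp]: "prods [] = oneser"
  by (rule ext) (simp add: prods_eq_sum_fiber fiber_0 oneser_def)

lemma prods_single [simp]: "prods [f] = f"
  by (rule ext) (simp add: prods_eq_sum_fiber fiber_1)

lemma prod_lessThan_eq_prod_list_map2:
  "length ss = length fs \<Longrightarrow> (\<Prod>i<length fs. (fs!i) (ss!i)) = prod_list (map2 (\<lambda>f s. f s) fs ss)"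
  by (simp add: prod.list_conv_set_nth atLeast0LessThan)

lemma prods_nonzeroE:
  assumes "prods fs S \<noteq> 0"
  obtains ss where "ss \<in> fiber (length fs) S" "\<And>i. i < length fs \<Longrightarrow> (fs!i) (ss!i) \<noteq> 0"
proof -
  from assms obtain ss where ss: "ss \<in> fiber (length fs) S" "(\<Prod>i<length fs. (fs!i) (ss!i)) \<noteq> 0"
    unfolding prods_eq_sum_fiber by (meson sum.not_neutral_contains_not_neutral)
  have "(fs!i) (ss!i) \<noteq> 0" if "i < length fs" for i
    using ss(2) that prod_zero[of "{..<length fs}" "\<lambda>i. (fs!i) (ss!i)"] by auto
  with ss(1) show ?thesis by (rule that)
qed

lemma bij_betw_insert_None:
  assumes "p \<le> m"
  shows "bij_betw (\<lambda>ss. take p ss @ None # drop p ss)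
           (fiber m S) {ss \<in> fiber (Suc m) S. ss ! p = None}"
proof (rule bij_betw_byWitness[where f' = "\<lambda>ss. take p ss @ drop (Suc p) ss"])
  show "\<forall>ss\<in>fiber m S. take p (take p ss @ None # drop p ss) @
          drop (Suc p) (take p ss @ None # drop p ss) = ss"
    using assms by (auto simp: fiber_def)
  show "\<forall>ss\<in>{ss \<in> fiber (Suc m) S. ss ! p = None}.
          take p (take p ss @ drop (Suc p) ss) @ None # drop p (take p ss @ drop (Suc p) ss) = ss"
    using assms by (auto simp: fiber_def min_def) (metis id_take_nth_drop less_Suc_eq_le)
  have "trees_of (take p ss @ None # drop p ss) = trees_of ss" for ss
    by (metis append_take_drop_id trees_of_simps(2,4))
  then show "(\<lambda>ss. take p ss @ None # drop p ss) ` fiber m S \<subseteq> {ss \<in> fiber (Suc m) S. ss ! p = None}"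
    using assms by (auto simp: fiber_def nth_append intro: bul_cong)
  have "trees_of (take p ss @ drop (Suc p) ss) = trees_of ss" if "ss ! p = None" "p < length ss" for ss
    by (metis that id_take_nth_drop trees_of_simps(2,4))
  then show "(\<lambda>ss. take p ss @ drop (Suc p) ss) ` {ss \<in> fiber (Suc m) S. ss ! p = None} \<subseteq> fiber m S"
    using assms by (auto simp: fiber_def intro: bul_cong)
qed

lemma prods_insert_oneser: "prods (xs @ oneser # ys) = prods (xs @ ys)"
proof (rule ext)
  fix S
  let ?p = "length xs" and ?m = "length (xs @ ys)" and ?fs = "xs @ oneser # ys" and ?gs = "xs @ ys"
  let ?ins = "\<lambda>ss. take ?p ss @ None # drop ?p ss"
  let ?Z = "{ss \<in> fiber (Suc ?m) S. ss ! ?p = None}"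
  have "prods ?fs S = (\<Sum>ss\<in>?Z. \<Prod>i<length ?fs. (?fs!i) (ss!i))"
    unfolding prods_eq_sum_fiber
  proof (rule sum.mono_neutral_right[OF finite_fiber])
    show "\<forall>ss\<in>fiber (length ?fs) S - ?Z. (\<Prod>i<length ?fs. (?fs!i) (ss!i)) = 0"
      by (intro ballI prod_zero bexI[of _ ?p]) (auto simp: oneser_def)
  qed auto
  also have "\<dots> = (\<Sum>ss\<in>fiber ?m S. \<Prod>i<length ?fs. (?fs!i) (?ins ss!i))"
    by (rule sum.reindex_bij_betw[OF bij_betw_insert_None, symmetric]) simp
  also have "\<dots> = (\<Sum>ss\<in>fiber ?m S. \<Prod>i<length ?gs. (?gs!i) (ss!i))"
  proof (rule sum.cong[OF refl])
    fix ss assume "ss \<in> fiber ?m S"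
    then have l: "length ss = ?m" by (simp add: fiber_def)
    then have "(\<Prod>i<length ?fs. (?fs!i) (?ins ss!i)) = prod_list (map2 (\<lambda>f s. f s) ?fs (?ins ss))"
      by (intro prod_lessThan_eq_prod_list_map2) simp
    also have "\<dots> = prod_list (map2 (\<lambda>f s. f s) ?gs ss)"
      using l zip_append[of xs "take ?p ss" ys "drop ?p ss"] by (simp add: zip_append oneser_def)
    also have "\<dots> = (\<Prod>i<length ?gs. (?gs!i) (ss!i))"
      using l by (intro prod_lessThan_eq_prod_list_map2[symmetric]) simp
    finally show "(\<Prod>i<length ?fs. (?fs!i) (?ins ss!i)) = (\<Prod>i<length ?gs. (?gs!i) (ss!i))" .
  qed
  finally show "prods ?fs S = prods ?gs S" by (simp add: prods_eq_sum_fiber)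
qed

lemma prods_filter:
  assumes "\<And>s. \<not> P s \<Longrightarrow> F s = oneser"
  shows "prods (xs @ map F ss) = prods (xs @ map F (filter P ss))"
proof (induction ss arbitrary: xs)
  case (Cons s ss)
  then show ?case
    using Cons.IH[of "xs @ [F s]"] Cons.IH[of xs] assms prods_insert_oneser by (cases "P s") auto
qed simp

lemma prod_lessThan_update:
  assumes "j < length fs"
  shows "(\<Prod>i<length fs. ((fs[j := G]) ! i) (ss ! i)) =
         G (ss ! j) * (\<Prod>i\<in>{..<length fs} - {j}. (fs ! i) (ss ! i))"
  using assms by (subst prod.remove[of _ j]) (auto intro!: prod.cong)

lemma prods_update_sum:
  assumes "j < length fs" "finite I"
  shows "prods (fs[j := (\<lambda>S. \<Sum>i\<in>I. F i S)]) S = (\<Sum>i\<in>I. prods (fs[j := F i]) S)"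
  unfolding prods_eq_sum_fiber using assms
  by (simp add: prod_lessThan_update sum_distrib_right sum.swap[of _ I])

lemma prods_update_diff:
  assumes "j < length fs"
  shows "prods (fs[j := (\<lambda>S. F S - G S)]) S = prods (fs[j := F]) S - prods (fs[j := G]) S"
  unfolding prods_eq_sum_fiber using assms
  by (simp add: prod_lessThan_update left_diff_distrib sum_subtractf)

lemma prods_nonzero_supportE:
  assumes "prods fs S \<noteq> 0"
  obtains ss where "ss \<in> fiber (length fs) S" "\<And>s. s \<in> set ss \<Longrightarrow> \<exists>f\<in>set fs. f s \<noteq> 0"
proof -
  obtain ss where ss: "ss \<in> fiber (length fs) S" "\<And>i. i < length fs \<Longrightarrow> (fs!i) (ss!i) \<noteq> 0"
    using prods_nonzeroE[OF assms] by blast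
  then have "\<exists>f\<in>set fs. f s \<noteq> 0" if "s \<in> set ss" for s
    using that by (auto simp: in_set_conv_nth fiber_def intro!: bexI[of _ "fs ! _"])
  with ss(1) show ?thesis by (rule that)
qed

section \<open>Locally finite series\<close>

text \<open>\<open>loc_finite\<close> is the finiteness condition in the definition of \<open>K{{x,y}\<close>;
  \<open>pos_ord_x a\<close> adds \<open>ord_x a \<ge> 1\<close>, the hypothesis under which \<open>phi a b\<close> is defined.\<close>

definition loc_finite :: "('a::zero) pser \<Rightarrow> bool" where
  "loc_finite f = (\<forall>n. finite {S. f S \<noteq> 0 \<and> degx S = n})"

definition pos_ord_x :: "('a::zero) pser \<Rightarrow> bool" where
  "pos_ord_x a = (loc_finite a \<and> (\<forall>S. a S \<noteq> 0 \<longrightarrow> 1 \<le> degx S))"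

definition y_free :: "('a::zero) pser \<Rightarrow> bool" where
  "y_free f = (\<forall>S. f S \<noteq> 0 \<longrightarrow> degy S = 0)"

lemma loc_finite_le: "loc_finite f \<Longrightarrow> finite {S. f S \<noteq> 0 \<and> degx S \<le> n}"
proof -
  assume "loc_finite f"
  moreover have "{S. f S \<noteq> 0 \<and> degx S \<le> n} = (\<Union>j\<le>n. {S. f S \<noteq> 0 \<and> degx S = j})" by auto
  ultimately show ?thesis by (simp add: loc_finite_def)
qed

lemma loc_finiteI: "(\<And>n. finite {S. f S \<noteq> 0 \<and> degx S \<le> n}) \<Longrightarrow> loc_finite f"
  unfolding loc_finite_def by (rule allI, rule finite_subset[rotated], assumption) auto

lemma loc_finite_single: "loc_finite (\<lambda>S. if S = S0 then c else 0)"
  by (rule loc_finiteI, rule finite_subset[of _ "{S0}"]) auto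

lemma loc_finite_oneser: "loc_finite oneser"
  unfolding oneser_def by (rule loc_finite_single)

lemma loc_finite_xser: "loc_finite xser"
  unfolding xser_def by (rule loc_finite_single)

lemma loc_finite_zero: "loc_finite (\<lambda>_. 0)"
  by (simp add: loc_finite_def)

lemma loc_finite_prods:
  assumes "\<And>f. f \<in> set fs \<Longrightarrow> loc_finite f"
  shows "loc_finite (prods fs)"
proof (rule loc_finiteI)
  fix n
  let ?B = "\<Union>f\<in>set fs. {S. f S \<noteq> 0 \<and> degx S \<le> n}"
  have "{S. prods fs S \<noteq> 0 \<and> degx S \<le> n} \<subseteq> bul ` {ss. set ss \<subseteq> ?B \<and> length ss = length fs}"
  proof
    fix S assume S: "S \<in> {S. prods fs S \<noteq> 0 \<and> degx S \<le> n}"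
    then obtain ss where "ss \<in> fiber (length fs) S" "\<And>s. s \<in> set ss \<Longrightarrow> \<exists>f\<in>set fs. f s \<noteq> 0"
      using prods_nonzero_supportE by blast
    moreover from this have "degx s \<le> n" if "s \<in> set ss" for s
      using S degx_le_degx_bul[OF _ that] by fastforce
    ultimately show "S \<in> bul ` {ss. set ss \<subseteq> ?B \<and> length ss = length fs}"
      by (force simp: fiber_def)
  qed
  moreover have "finite ?B" using assms loc_finite_le by auto
  ultimately show "finite {S. prods fs S \<noteq> 0 \<and> degx S \<le> n}"
    using finite_lists_length_eq finite_subset by blast
qed

lemma y_free_prods:
  assumes "\<And>f. f \<in> set fs \<Longrightarrow> y_free f"
  shows "y_free (prods fs)"
  unfolding y_free_def
proof (intro allI impI)
  fix S assume "prods fs S \<noteq> 0"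
  then obtain ss where "ss \<in> fiber (length fs) S" "\<And>s. s \<in> set ss \<Longrightarrow> \<exists>f\<in>set fs. f s \<noteq> 0"
    using prods_nonzero_supportE by blast
  with assms show "degy S = 0" by (fastforce simp: fiber_def degy_bul y_free_def)
qed

lemma mem_serx_iff: "f \<in> serx \<longleftrightarrow> (\<forall>S. f S \<noteq> 0 \<longrightarrow> x_tree S)"
proof
  assume x: "\<forall>S. f S \<noteq> 0 \<longrightarrow> x_tree S"
  have "finite {S. f S \<noteq> 0 \<and> degx S = n}" for n
  proof (rule finite_subset)
    show "{S. f S \<noteq> 0 \<and> degx S = n} \<subseteq> insert None (Some ` {t. wfT t \<and> degT t = n})"
    proof
      fix S assume "S \<in> {S. f S \<noteq> 0 \<and> degx S = n}"
      with x show "S \<in> insert None (Some ` {t. wfT t \<and> degT t = n})"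
        by (cases S) (auto simp: x_tree_def degx_def degT_eq_degxT_add_degyT)
    qed
  qed (simp add: finite_wfT_degT)
  moreover have "wfT T \<and> degyT T = 0" if "f (Some T) \<noteq> 0" for T
    using x[rule_format, OF that] by (simp add: x_tree_def)
  ultimately show "f \<in> serx" by (simp add: serx_def serxy_def)
next
  assume "f \<in> serx"
  then have "wfT T \<and> degyT T = 0" if "f (Some T) \<noteq> 0" for T
    using that unfolding serx_def serxy_def by blast
  then show "\<forall>S. f S \<noteq> 0 \<longrightarrow> x_tree S" unfolding x_tree_def by (auto split: option.split)
qed

lemma serx_loc_finite: "f \<in> serx \<Longrightarrow> loc_finite f"
  by (simp add: serx_def serxy_def loc_finite_def)

lemma serx_y_free: "f \<in> serx \<Longrightarrow> y_free f"
  unfolding y_free_def mem_serx_iff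
proof (intro allI impI)
  fix S assume "\<forall>S. f S \<noteq> 0 \<longrightarrow> x_tree S" "f S \<noteq> 0"
  then show "degy S = 0" by (cases S) (auto simp: x_tree_def degy_def)
qed

lemma oneser_in_serx: "oneser \<in> serx"
  by (simp add: mem_serx_iff oneser_def x_tree_def)

lemma xser_in_serx: "xser \<in> serx"
  by (simp add: mem_serx_iff xser_def x_tree_def)

lemma serx_add:
  fixes f g :: "('a::comm_ring_1) pser"
  assumes "f \<in> serx" "g \<in> serx"
  shows "(\<lambda>S. f S + g S) \<in> serx"
  using assms unfolding mem_serx_iff by (metis add.left_neutral)

lemma serx_diff:
  fixes f g :: "('a::comm_ring_1) pser"
  assumes "f \<in> serx" "g \<in> serx"
  shows "(\<lambda>S. f S - g S) \<in> serx"
  using assms unfolding mem_serx_iff by (metis diff_self)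

lemma serx_prods:
  assumes "\<And>f. f \<in> set fs \<Longrightarrow> f \<in> serx"
  shows "prods fs \<in> serx"
  unfolding mem_serx_iff
proof (intro allI impI)
  fix S assume "prods fs S \<noteq> 0"
  then obtain ss where "ss \<in> fiber (length fs) S" "\<And>s. s \<in> set ss \<Longrightarrow> \<exists>f\<in>set fs. f s \<noteq> 0"
    using prods_nonzero_supportE by blast
  with assms have "x_tree s" if "s \<in> set ss" for s
    using that unfolding mem_serx_iff by blast
  with \<open>ss \<in> fiber (length fs) S\<close> show "x_tree S"
    using x_tree_bul[of ss] by (simp add: fiber_def)
qed

section \<open>Substitution\<close>

lemma sum_list_map_le_nth:
  fixes f g :: "_ \<Rightarrow> nat"
  assumes "length xs = length ys" "\<And>i. i < length xs \<Longrightarrow> f (xs!i) \<le> g (ys!i)"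
  shows "(\<Sum>x\<leftarrow>xs. f x) \<le> (\<Sum>y\<leftarrow>ys. g y)"
  using assms by (auto simp: sum_list_sum_nth intro!: sum_mono)

lemma sum_list_map_eq_nth:
  fixes f g :: "_ \<Rightarrow> nat"
  assumes "length xs = length ys" "\<And>i. i < length xs \<Longrightarrow> f (xs!i) \<le> g (ys!i)"
    and "(\<Sum>y\<leftarrow>ys. g y) \<le> (\<Sum>x\<leftarrow>xs. f x)" "i < length xs"
  shows "f (xs!i) = g (ys!i)"
proof (rule ccontr)
  assume "f (xs!i) \<noteq> g (ys!i)"
  with assms have "(\<Sum>j=0..<length xs. f (xs!j)) < (\<Sum>j=0..<length xs. g (ys!j))"
    by (intro sum_strict_mono_ex1) (auto intro!: bexI[of _ i] simp: le_neq_implies_less)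
  with assms(1,3) show False by (simp add: sum_list_sum_nth)
qed

lemma degx_le_if_phiO_nonzero:
  assumes "pos_ord_x a" "phiO a b S T \<noteq> 0"
  shows "degx S \<le> degx T"
proof -
  have "phiT a b s T \<noteq> 0 \<Longrightarrow> degxT s \<le> degx T" for s T
  proof (induction s arbitrary: T)
    case (Lf l)
    then show ?case using assms(1) by (cases l) (auto simp: pos_ord_x_def)
  next
    case (Nd ts)
    then obtain ss where ss: "ss \<in> fiber (length ts) T" "\<And>i. i < length ts \<Longrightarrow> phiT a b (ts!i) (ss!i) \<noteq> 0"
      by (auto elim: prods_nonzeroE)
    then have "(\<Sum>t\<leftarrow>ts. degxT t) \<le> (\<Sum>s\<leftarrow>ss. degx s)"
      using Nd.IH by (intro sum_list_map_le_nth) (auto simp: fiber_def)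
    then show ?case using ss(1) degx_bul[of ss] by (simp add: fiber_def)
  qed
  with assms(2) show ?thesis by (cases S) (auto simp: phiO_def degx_def oneser_def split: if_splits)
qed

lemma phi_eq_sum:
  assumes "pos_ord_x a" "finite A" "{S. f S \<noteq> 0 \<and> degx S \<le> degx T} \<subseteq> A"
  shows "phi a b f T = (\<Sum>S\<in>A. f S * phiO a b S T)"
  unfolding phi_def
proof (rule sum.mono_neutral_left[OF assms(2,3)])
  show "\<forall>S\<in>A - {S. f S \<noteq> 0 \<and> degx S \<le> degx T}. f S * phiO a b S T = 0"
  proof
    fix S assume "S \<in> A - {S. f S \<noteq> 0 \<and> degx S \<le> degx T}"
    then have "f S = 0 \<or> phiO a b S T = 0" using degx_le_if_phiO_nonzero[OF assms(1)] by blast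
    then show "f S * phiO a b S T = 0" by auto
  qed
qed

lemma phi_nonzeroE:
  assumes "phi a b f T \<noteq> 0"
  obtains S where "f S \<noteq> 0" "degx S \<le> degx T" "phiO a b S T \<noteq> 0"
proof -
  from assms obtain S where S: "S \<in> {S. f S \<noteq> 0 \<and> degx S \<le> degx T}" "f S * phiO a b S T \<noteq> 0"
    unfolding phi_def by (meson sum.not_neutral_contains_not_neutral)
  then have "phiO a b S T \<noteq> 0" by auto
  with S(1) that show ?thesis by blast
qed

lemma loc_finite_phiO:
  assumes "pos_ord_x a" "loc_finite b"
  shows "loc_finite (phiO a b S)"
proof -
  have "loc_finite (phiT a b s)" for s
  proof (induction s)
    case (Lf l) then show ?case using assms by (cases l) (auto simp: pos_ord_x_def)
  next
    case (Nd ts) then show ?case by simp (intro loc_finite_prods, auto)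
  qed
  then show ?thesis using loc_finite_oneser by (cases S) (auto simp: phiO_def)
qed

lemma loc_finite_phi:
  assumes a: "pos_ord_x a" and b: "loc_finite b" and f: "loc_finite f"
  shows "loc_finite (phi a b f)"
proof (rule loc_finiteI)
  fix n
  let ?A = "{S. f S \<noteq> 0 \<and> degx S \<le> n}"
  have "{T. phi a b f T \<noteq> 0 \<and> degx T \<le> n} \<subseteq> (\<Union>S\<in>?A. {T. phiO a b S T \<noteq> 0 \<and> degx T \<le> n})"
    by (auto elim!: phi_nonzeroE)
  moreover have "finite (\<Union>S\<in>?A. {T. phiO a b S T \<noteq> 0 \<and> degx T \<le> n})"
    using loc_finite_le[OF f] loc_finite_le[OF loc_finite_phiO[OF a b]] by blast
  ultimately show "finite {T. phi a b f T \<noteq> 0 \<and> degx T \<le> n}" by (rule finite_subset)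
qed

lemma phiO_bul: "phiO a b (bul ss) = prods (map (phiO a b) ss)"
proof -
  have "prods (map (phiO a b) ss) = prods ([] @ map (phiO a b) (filter (\<lambda>s. s \<noteq> None) ss))"
    using prods_filter[of "\<lambda>s. s \<noteq> None" "phiO a b" "[]" ss] by (simp add: phiO_def)
  also have "map (phiO a b) (filter (\<lambda>s. s \<noteq> None) ss) = map (phiT a b) (trees_of ss)"
    unfolding trees_of_def by (auto simp: phiO_def)
  finally have "prods (map (phiO a b) ss) = prods (map (phiT a b) (trees_of ss))" by simp
  then show ?thesis by (cases ss rule: bul_cases) (simp_all add: phiO_def)
qed

lemma prod_sum_eq_sum_lists:
  fixes h :: "nat \<Rightarrow> 'b \<Rightarrow> 'a::comm_semiring_1"
  assumes "finite B"
  shows "(\<Prod>i<m. \<Sum>S\<in>B. h i S) = (\<Sum>ss\<in>{ss. set ss \<subseteq> B \<and> length ss = m}. \<Prod>i<m. h i (ss!i))"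
proof (induction m arbitrary: h)
  case 0
  have "{ss. set ss \<subseteq> B \<and> length ss = 0} = {[]}" by auto
  then show ?case by simp
next
  case (Suc m)
  let ?C = "\<lambda>m. {ss. set ss \<subseteq> B \<and> length ss = m}"
  have "(\<Prod>i<Suc m. \<Sum>S\<in>B. h i S) = (\<Sum>S\<in>B. h 0 S) * (\<Sum>ss\<in>?C m. \<Prod>i<m. h (Suc i) (ss!i))"
    using Suc.IH[of "\<lambda>i. h (Suc i)"] by (simp only: prod.lessThan_Suc_shift)
  also have "\<dots> = (\<Sum>p\<in>B \<times> ?C m. h 0 (fst p) * (\<Prod>i<m. h (Suc i) (snd p ! i)))"
    by (simp add: sum_product sum.cartesian_product split_def)
  also have "\<dots> = (\<Sum>ss\<in>?C (Suc m). \<Prod>i<Suc m. h i (ss!i))"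
  proof (rule sum.reindex_bij_witness[where i = "\<lambda>ss. (hd ss, tl ss)" and j = "\<lambda>p. fst p # snd p"])
    fix ss assume "ss \<in> ?C (Suc m)"
    then show "fst (hd ss, tl ss) # snd (hd ss, tl ss) = ss" "(hd ss, tl ss) \<in> B \<times> ?C m"
      by (cases ss; auto)+
  next
    fix p assume "p \<in> B \<times> ?C m"
    then show "(hd (fst p # snd p), tl (fst p # snd p)) = p" "fst p # snd p \<in> ?C (Suc m)" by auto
    show "(\<Prod>i<Suc m. h i ((fst p # snd p)!i)) = h 0 (fst p) * (\<Prod>i<m. h (Suc i) (snd p ! i))"
      by (simp only: prod.lessThan_Suc_shift nth_Cons_0 nth_Cons_Suc)
  qed
  finally show ?case .
qed

lemma prods_eq_sum_supported_lists:
  assumes "degx S \<le> n"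
  shows "prods fs S = (\<Sum>ss\<in>{ss. set ss \<subseteq> (\<Union>f\<in>set fs. {S. f S \<noteq> 0 \<and> degx S \<le> n}) \<and>
                               length ss = length fs \<and> bul ss = S}. \<Prod>i<length fs. (fs!i) (ss!i))"
  unfolding prods_eq_sum_fiber
proof (rule sum.mono_neutral_right[OF finite_fiber])
  show "\<forall>ss\<in>fiber (length fs) S - {ss. set ss \<subseteq> (\<Union>f\<in>set fs. {S. f S \<noteq> 0 \<and> degx S \<le> n}) \<and>
          length ss = length fs \<and> bul ss = S}. (\<Prod>i<length fs. (fs!i) (ss!i)) = 0"
  proof (intro ballI prod_zero)
    fix ss assume ss: "ss \<in> fiber (length fs) S - {ss. set ss \<subseteq> (\<Union>f\<in>set fs. {S. f S \<noteq> 0 \<and> degx S \<le> n}) \<and>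
          length ss = length fs \<and> bul ss = S}"
    then have "\<not> set ss \<subseteq> (\<Union>f\<in>set fs. {S. f S \<noteq> 0 \<and> degx S \<le> n})" "length ss = length fs"
      by (auto simp: fiber_def)
    then obtain i where i: "i < length fs" "ss!i \<notin> (\<Union>f\<in>set fs. {S. f S \<noteq> 0 \<and> degx S \<le> n})"
      by (auto simp: subset_iff in_set_conv_nth)
    moreover have "degx (ss!i) \<le> n"
      using ss i assms degx_le_degx_bul[of ss _ S "ss!i"] by (auto simp: fiber_def)
    ultimately show "\<exists>i\<in>{..<length fs}. (fs!i) (ss!i) = 0" by auto
  qed simp
qed (auto simp: fiber_def)

lemma phi_prods_eq_sum_lists:
  assumes a: "pos_ord_x a" and fs: "\<And>f. f \<in> set fs \<Longrightarrow> loc_finite f"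
    and C: "C = {ss. set ss \<subseteq> (\<Union>f\<in>set fs. {S. f S \<noteq> 0 \<and> degx S \<le> degx T}) \<and> length ss = length fs}"
  shows "phi a b (prods fs) T = (\<Sum>ss\<in>C. (\<Prod>i<length fs. (fs!i) (ss!i)) * phiO a b (bul ss) T)"
proof -
  let ?tup = "\<lambda>ss. \<Prod>i<length fs. (fs!i) (ss!i)"
  have "finite (\<Union>f\<in>set fs. {S. f S \<noteq> 0 \<and> degx S \<le> degx T})" using fs loc_finite_le by blast
  then have fC: "finite C" unfolding C by (rule finite_lists_length_eq)
  have "phi a b (prods fs) T = (\<Sum>S\<in>bul ` C. prods fs S * phiO a b S T)"
  proof (rule phi_eq_sum[OF a])
    show "{S. prods fs S \<noteq> 0 \<and> degx S \<le> degx T} \<subseteq> bul ` C"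
      using prods_eq_sum_supported_lists[of _ "degx T" fs] unfolding C
      by (force elim: sum.not_neutral_contains_not_neutral)
  qed (use fC in simp)
  also have "\<dots> = (\<Sum>S\<in>bul ` C. \<Sum>ss\<in>{ss\<in>C. bul ss = S}. ?tup ss * phiO a b S T)"
  proof (rule sum.cong[OF refl])
    fix S
    show "prods fs S * phiO a b S T = (\<Sum>ss\<in>{ss\<in>C. bul ss = S}. ?tup ss * phiO a b S T)"
    proof (cases "degx S \<le> degx T")
      case True
      then show ?thesis unfolding prods_eq_sum_supported_lists[OF True] C
        by (simp add: sum_distrib_right conj_assoc)
    next
      case False
      then have "phiO a b S T = 0" using degx_le_if_phiO_nonzero[OF a] by blast
      then show ?thesis by simp
    qed
  qed
  also have "\<dots> = (\<Sum>S\<in>bul ` C. \<Sum>ss\<in>{ss\<in>C. bul ss = S}. ?tup ss * phiO a b (bul ss) T)"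
    by (intro sum.cong) auto
  also have "\<dots> = (\<Sum>ss\<in>C. ?tup ss * phiO a b (bul ss) T)"
    by (rule sum.image_gen[OF fC, symmetric])
  finally show ?thesis .
qed

lemma prods_map_phi_eq_sum_lists:
  assumes a: "pos_ord_x a" and fs: "\<And>f. f \<in> set fs \<Longrightarrow> loc_finite f"
    and C: "C = {ss. set ss \<subseteq> (\<Union>f\<in>set fs. {S. f S \<noteq> 0 \<and> degx S \<le> degx T}) \<and> length ss = length fs}"
  shows "prods (map (phi a b) fs) T =
           (\<Sum>ss\<in>C. (\<Prod>i<length fs. (fs!i) (ss!i)) * prods (map (phiO a b) ss) T)"
proof -
  let ?m = "length fs"
  define B where "B = (\<Union>f\<in>set fs. {S. f S \<noteq> 0 \<and> degx S \<le> degx T})"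
  have fB: "finite B" unfolding B_def using fs loc_finite_le by auto
  have "prods (map (phi a b) fs) T = (\<Sum>tt\<in>fiber ?m T. \<Prod>i<?m. phi a b (fs!i) (tt!i))"
    unfolding prods_eq_sum_fiber by simp
  also have "\<dots> = (\<Sum>tt\<in>fiber ?m T. \<Prod>i<?m. \<Sum>S\<in>B. (fs!i) S * phiO a b S (tt!i))"
  proof (intro sum.cong prod.cong refl phi_eq_sum[OF a fB])
    fix tt i assume "tt \<in> fiber ?m T" "i \<in> {..<?m}"
    then have "degx (tt!i) \<le> degx T" by (auto simp: fiber_def intro: degx_le_degx_bul)
    with \<open>i \<in> {..<?m}\<close> show "{S. (fs!i) S \<noteq> 0 \<and> degx S \<le> degx (tt!i)} \<subseteq> B"
      unfolding B_def by force
  qed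
  also have "\<dots> = (\<Sum>tt\<in>fiber ?m T. \<Sum>ss\<in>C. \<Prod>i<?m. (fs!i) (ss!i) * phiO a b (ss!i) (tt!i))"
    unfolding C B_def[symmetric] by (rule sum.cong[OF refl], rule prod_sum_eq_sum_lists[OF fB])
  also have "\<dots> = (\<Sum>ss\<in>C. (\<Prod>i<?m. (fs!i) (ss!i)) * prods (map (phiO a b) ss) T)"
    unfolding prods_eq_sum_fiber
    by (subst sum.swap) (auto simp: prod.distrib sum_distrib_left C intro!: sum.cong)
  finally show ?thesis .
qed

lemma phi_prods:
  assumes "pos_ord_x a" "\<And>f. f \<in> set fs \<Longrightarrow> loc_finite f"
  shows "phi a b (prods fs) T = prods (map (phi a b) fs) T"
  using phi_prods_eq_sum_lists[OF assms refl] prods_map_phi_eq_sum_lists[OF assms refl] by (simp add: phiO_bul)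

definition yser :: "('a::{zero,one}) pser" where
  "yser = (\<lambda>S. if S = Some (Lf Y) then 1 else 0)"

lemma phi_single:
  "pos_ord_x a \<Longrightarrow> phi a b (\<lambda>S. if S = S0 then c else 0) T = c * phiO a b S0 T"
  by (subst phi_eq_sum[where A = "{S0}"]) auto

lemma phi_oneser: "pos_ord_x a \<Longrightarrow> phi a b oneser = oneser"
  by (rule ext) (simp add: oneser_def phi_single phiO_def)

lemma phi_xser: "pos_ord_x a \<Longrightarrow> phi a b xser = a"
  by (rule ext) (simp add: xser_def phi_single phiO_def)

lemma phi_yser: "pos_ord_x a \<Longrightarrow> phi a b yser = b"
  by (rule ext) (simp add: yser_def phi_single phiO_def)

lemma pos_ord_x_xser: "pos_ord_x xser"
  using loc_finite_xser by (simp add: pos_ord_x_def xser_def degx_def)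

lemma phi_add:
  assumes a: "pos_ord_x a" and f: "loc_finite f" and g: "loc_finite g"
  shows "phi a b (\<lambda>S. f S + g S) T = phi a b f T + phi a b g T"
proof -
  let ?A = "{S. f S \<noteq> 0 \<and> degx S \<le> degx T} \<union> {S. g S \<noteq> 0 \<and> degx S \<le> degx T}"
  have fA: "finite ?A" using loc_finite_le f g by auto
  have "phi a b (\<lambda>S. f S + g S) T = (\<Sum>S\<in>?A. (f S + g S) * phiO a b S T)"
    by (rule phi_eq_sum[OF a fA]) auto
  also have "\<dots> = phi a b f T + phi a b g T"
    by (subst (1 2) phi_eq_sum[OF a fA]) (auto simp: distrib_right sum.distrib)
  finally show ?thesis .
qed

lemma phi_diff:
  assumes a: "pos_ord_x a" and f: "loc_finite f" and g: "loc_finite g"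
  shows "phi a b (\<lambda>S. f S - g S) T = phi a b f T - phi a b g T"
proof -
  let ?A = "{S. f S \<noteq> 0 \<and> degx S \<le> degx T} \<union> {S. g S \<noteq> 0 \<and> degx S \<le> degx T}"
  have fA: "finite ?A" using loc_finite_le f g by auto
  have "phi a b (\<lambda>S. f S - g S) T = (\<Sum>S\<in>?A. (f S - g S) * phiO a b S T)"
    by (rule phi_eq_sum[OF a fA]) auto
  also have "\<dots> = phi a b f T - phi a b g T"
    by (subst (1 2) phi_eq_sum[OF a fA]) (auto simp: left_diff_distrib sum_subtractf)
  finally show ?thesis .
qed

lemma phi_sum:
  assumes a: "pos_ord_x a" and I: "finite I" and F: "\<And>i. i \<in> I \<Longrightarrow> loc_finite (F i)"
  shows "phi a b (\<lambda>S. \<Sum>i\<in>I. F i S) T = (\<Sum>i\<in>I. phi a b (F i) T)"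
proof -
  let ?A = "\<Union>i\<in>I. {S. F i S \<noteq> 0 \<and> degx S \<le> degx T}"
  have fA: "finite ?A" using loc_finite_le F I by auto
  have "phi a b (\<lambda>S. \<Sum>i\<in>I. F i S) T = (\<Sum>S\<in>?A. (\<Sum>i\<in>I. F i S) * phiO a b S T)"
    by (rule phi_eq_sum[OF a fA]) (auto dest: sum.not_neutral_contains_not_neutral)
  also have "\<dots> = (\<Sum>i\<in>I. \<Sum>S\<in>?A. F i S * phiO a b S T)"
    by (simp add: sum_distrib_right sum.swap[of _ ?A])
  also have "\<dots> = (\<Sum>i\<in>I. phi a b (F i) T)"
    by (intro sum.cong refl phi_eq_sum[OF a fA, symmetric]) auto
  finally show ?thesis .
qed

lemma pos_ord_x_phi:
  assumes a: "pos_ord_x a" and b: "loc_finite b" and g: "pos_ord_x g"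
  shows "pos_ord_x (phi a b g)"
proof -
  have "1 \<le> degx T" if "phi a b g T \<noteq> 0" for T
    using that g by (force simp: pos_ord_x_def elim: phi_nonzeroE)
  then show ?thesis using loc_finite_phi a b g by (auto simp: pos_ord_x_def)
qed

lemma phiO_phiO:
  assumes a: "pos_ord_x a" and b: "loc_finite b" and g: "pos_ord_x g" and h: "loc_finite h"
  shows "phi a b (phiO g h S) = phiO (phi a b g) (phi a b h) S"
proof -
  have "phi a b (phiT g h s) = phiT (phi a b g) (phi a b h) s" for s
  proof (induction s)
    case (Lf l) then show ?case by (cases l) auto
  next
    case (Nd ts)
    have "\<forall>f\<in>set (map (phiT g h) ts). loc_finite f"
      using loc_finite_phiO[OF g h, of "Some _"] by (auto simp: phiO_def)
    then have "phi a b (phiT g h (Nd ts)) = prods (map (phi a b) (map (phiT g h) ts))"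
      using phi_prods[OF a, of "map (phiT g h) ts"] by (auto intro!: ext)
    also have "map (phi a b) (map (phiT g h) ts) = map (phiT (phi a b g) (phi a b h)) ts"
      using Nd by simp
    finally show ?case by simp
  qed
  then show ?thesis using phi_oneser[OF a] by (cases S) (auto simp: phiO_def)
qed

lemma phi_phi:
  assumes a: "pos_ord_x a" and b: "loc_finite b" and g: "pos_ord_x g" and h: "loc_finite h"
    and f: "loc_finite f"
  shows "phi a b (phi g h f) = phi (phi a b g) (phi a b h) f"
proof (rule ext)
  fix T
  define AS where "AS = {S. f S \<noteq> 0 \<and> degx S \<le> degx T}"
  define AU where "AU = (\<Union>S\<in>AS. {U. phiO g h S U \<noteq> 0 \<and> degx U \<le> degx T})"
  have fAS: "finite AS" unfolding AS_def using loc_finite_le[OF f] .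
  have fAU: "finite AU" unfolding AU_def using fAS loc_finite_le[OF loc_finite_phiO[OF g h]] by blast
  have "phi a b (phi g h f) T = (\<Sum>U\<in>AU. phi g h f U * phiO a b U T)"
  proof (rule phi_eq_sum[OF a fAU], rule subsetI)
    fix U assume U: "U \<in> {U. phi g h f U \<noteq> 0 \<and> degx U \<le> degx T}"
    then obtain S where "f S \<noteq> 0" "degx S \<le> degx U" "phiO g h S U \<noteq> 0"
      by (auto elim: phi_nonzeroE)
    with U show "U \<in> AU" by (auto simp: AU_def AS_def)
  qed
  also have "\<dots> = (\<Sum>U\<in>AU. (\<Sum>S\<in>AS. f S * phiO g h S U) * phiO a b U T)"
    using g by (intro sum.cong refl arg_cong2[where f = times] phi_eq_sum[OF _ fAS])
      (auto simp: AS_def AU_def pos_ord_x_def)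
  also have "\<dots> = (\<Sum>S\<in>AS. f S * (\<Sum>U\<in>AU. phiO g h S U * phiO a b U T))"
    by (simp add: sum_distrib_left sum_distrib_right mult.assoc sum.swap[of _ AU])
  also have "\<dots> = (\<Sum>S\<in>AS. f S * phi a b (phiO g h S) T)"
    by (intro sum.cong refl arg_cong2[where f = times] phi_eq_sum[OF a fAU, symmetric])
      (auto simp: AU_def)
  also have "\<dots> = phi (phi a b g) (phi a b h) f T"
    unfolding phiO_phiO[OF a b g h]
    by (rule phi_eq_sum[OF pos_ord_x_phi[OF a b g] fAS, symmetric]) (auto simp: AS_def)
  finally show "phi a b (phi g h f) T = phi (phi a b g) (phi a b h) f T" .
qed

lemma serx_phiO:
  assumes "a \<in> serx" "b \<in> serx"
  shows "phiO a b S \<in> serx"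
proof -
  have "phiT a b s \<in> serx" for s
  proof (induction s)
    case (Lf l) then show ?case using assms by (cases l) auto
  next
    case (Nd ts) then show ?case by simp (intro serx_prods, auto)
  qed
  then show ?thesis using oneser_in_serx by (cases S) (auto simp: phiO_def)
qed

lemma serx_phi:
  assumes "a \<in> serx" "b \<in> serx"
  shows "phi a b f \<in> serx"
  using serx_phiO[OF assms] unfolding mem_serx_iff by (auto elim: phi_nonzeroE)

lemma phiT_indep_y: "degyT t = 0 \<Longrightarrow> phiT a b t = phiT a b' t"
proof (induction t)
  case (Lf l) then show ?case by (cases l) auto
next
  case (Nd ts)
  then have "map (phiT a b) ts = map (phiT a b') ts" by (intro map_cong) auto
  then show ?case by (simp only: phiT.simps)
qed

lemma sum_fiber_indicator:
  assumes "2 \<le> length ts"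
  shows "(\<Sum>ss\<in>fiber (length ts) T. if ss = map Some ts then (1::'a::comm_ring_1) else 0) =
         (if T = Some (Nd ts) then 1 else 0)"
proof -
  have "bul (map Some ts) = Some (Nd ts)" using assms by (intro bul_several_trees) simp_all
  then have "map Some ts \<in> fiber (length ts) T \<longleftrightarrow> T = Some (Nd ts)" by (auto simp: fiber_def)
  then show ?thesis by (simp add: sum.delta[OF finite_fiber])
qed

lemma prod_indicator_eq_map_Some:
  assumes "length ss = length ts"
  shows "(\<Prod>i<length ts. if ss!i = Some (ts!i) then 1 else 0) =
         (if ss = map Some ts then 1 else (0::'a::comm_ring_1))"
proof (cases "ss = map Some ts")
  case False
  with assms obtain i where "i < length ts" "ss!i \<noteq> Some (ts!i)"
    by (auto simp: list_eq_iff_nth_eq)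
  with False show ?thesis by (auto intro!: prod_zero)
qed simp

lemma phiO_xser:
  assumes "x_tree S"
  shows "phiO xser b S = (\<lambda>T. if T = S then 1 else 0)"
proof -
  have "wfT t \<Longrightarrow> degyT t = 0 \<Longrightarrow> phiT xser b t = (\<lambda>T. if T = Some t then 1 else 0)" for t
  proof (induction t)
    case (Lf l) then show ?case by (cases l) (auto simp: xser_def)
  next
    case (Nd ts)
    have ih: "\<forall>i<length ts. phiT xser b (ts!i) = (\<lambda>T. if T = Some (ts!i) then 1 else 0)"
      using Nd by auto
    show ?case
    proof (rule ext)
      fix T
      have "phiT xser b (Nd ts) T = (\<Sum>ss\<in>fiber (length ts) T. if ss = map Some ts then 1 else 0)"
        unfolding phiT.simps prods_map_eq_sum_fiber using ih
        by (intro sum.cong refl) (simp add: prod_indicator_eq_map_Some fiber_def)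
      also have "\<dots> = (if T = Some (Nd ts) then 1 else 0)"
        using Nd.prems by (intro sum_fiber_indicator) simp
      finally show "phiT xser b (Nd ts) T = (if T = Some (Nd ts) then 1 else 0)" .
    qed
  qed
  then show ?thesis using assms by (cases S) (auto simp: phiO_def x_tree_def oneser_def)
qed

lemma phi_xser_left:
  assumes "f \<in> serx"
  shows "phi xser b f = f"
proof (rule ext)
  fix T
  let ?A = "{S. f S \<noteq> 0 \<and> degx S \<le> degx T}"
  have "phi xser b f T = (\<Sum>S\<in>?A. if T = S then f S else 0)"
    unfolding phi_def using assms by (intro sum.cong refl) (auto simp: mem_serx_iff phiO_xser)
  also have "\<dots> = f T" using loc_finite_le[OF serx_loc_finite[OF assms]] by (auto simp: sum.delta)
  finally show "phi xser b f T = f T" .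
qed

text \<open>A series \<open>g = x + (terms of x-degree \<ge> 2)\<close>.  Substituting it is unitriangular with respect
  to the x-degree, which gives injectivity and compositional inverses.\<close>

definition tangent_to_x :: "('a::comm_ring_1) pser \<Rightarrow> bool" where
  "tangent_to_x g =
     (pos_ord_x g \<and> g (Some (Lf X)) = 1 \<and> (\<forall>S. g S \<noteq> 0 \<longrightarrow> S = Some (Lf X) \<or> 2 \<le> degx S))"

lemma tangent_to_x_pos_ord_x: "tangent_to_x g \<Longrightarrow> pos_ord_x g"
  by (simp add: tangent_to_x_def)

lemma prod_triangular:
  assumes l: "length ss = length ts" and deg: "(\<Sum>s\<leftarrow>ss. degx s) \<le> (\<Sum>t\<leftarrow>ts. degxT t)"
    and nz: "\<And>i U. i < length ts \<Longrightarrow> F i U \<noteq> 0 \<Longrightarrow> degxT (ts!i) \<le> degx U"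
    and tri: "\<And>i U. i < length ts \<Longrightarrow> degx U \<le> degxT (ts!i) \<Longrightarrow>
                F i U = (if U = Some (ts!i) then 1 else 0)"
  shows "(\<Prod>i<length ts. F i (ss!i)) = (if ss = map Some ts then 1 else (0::'a::comm_ring_1))"
proof (cases "\<forall>i<length ts. F i (ss!i) \<noteq> 0")
  case True
  then have "degxT (ts!i) = degx (ss!i)" if "i < length ts" for i
    using l deg nz that by (intro sum_list_map_eq_nth) auto
  then have "F i (ss!i) = (if ss!i = Some (ts!i) then 1 else 0)" if "i < length ts" for i
    using tri that by simp
  then show ?thesis using l by (simp add: prod_indicator_eq_map_Some)
next
  case False
  then obtain i where i: "i < length ts" "F i (ss!i) = 0" by auto
  moreover have "ss \<noteq> map Some ts"
  proof
    assume "ss = map Some ts"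
    then show False using i tri[of i "ss!i"] by (simp add: degx_def)
  qed
  ultimately show ?thesis by (auto intro: prod_zero)
qed

lemma phiT_tangent_to_x:
  assumes g: "tangent_to_x g"
  shows "wfT t \<Longrightarrow> degyT t = 0 \<Longrightarrow> degx T \<le> degxT t \<Longrightarrow> phiT g b t T = (if T = Some t then 1 else 0)"
proof (induction t arbitrary: T)
  case (Lf l)
  then have "l = X" by (cases l) auto
  moreover have "g T = 0" if "T \<noteq> Some (Lf X)" "degx T \<le> 1"
    using g that by (auto simp: tangent_to_x_def)
  ultimately show ?case using g Lf.prems by (auto simp: tangent_to_x_def)
next
  case (Nd ts)
  have ih: "phiT g b (ts!i) U = (if U = Some (ts!i) then 1 else 0)"
    if "i < length ts" "degx U \<le> degxT (ts!i)" for i U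
    using Nd that by simp
  have "phiT g b (Nd ts) T = (\<Sum>ss\<in>fiber (length ts) T. if ss = map Some ts then 1 else 0)"
  proof (unfold phiT.simps prods_map_eq_sum_fiber, intro sum.cong refl prod_triangular)
    fix ss assume "ss \<in> fiber (length ts) T"
    with Nd.prems(3) show "length ss = length ts" "(\<Sum>s\<leftarrow>ss. degx s) \<le> (\<Sum>t\<leftarrow>ts. degxT t)"
      by (auto simp: fiber_def degx_bul)
  next
    fix i U assume "phiT g b (ts!i) U \<noteq> 0"
    then show "degxT (ts!i) \<le> degx U"
      using degx_le_if_phiO_nonzero[of g b "Some (ts!i)"] g
      by (simp add: tangent_to_x_def phiO_def degx_def)
  qed (rule ih)
  also have "\<dots> = (if T = Some (Nd ts) then 1 else 0)"
    using Nd.prems by (intro sum_fiber_indicator) simp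
  finally show ?case .
qed

lemma phiO_tangent_to_x:
  assumes "tangent_to_x g" "x_tree S" "degx T \<le> degx S"
  shows "phiO g b S T = (if T = S then 1 else 0)"
  using assms phiT_tangent_to_x[OF assms(1)]
  by (cases S) (auto simp: phiO_def oneser_def x_tree_def degx_def)

lemma phi_tangent_to_x_injective:
  assumes g: "tangent_to_x g" and f: "f \<in> serx" and z: "phi g b f = (\<lambda>_. 0)"
  shows "f = (\<lambda>_. 0)"
proof (rule ccontr)
  assume "f \<noteq> (\<lambda>_. 0)"
  then obtain S0 where S0: "f S0 \<noteq> 0" and min: "\<And>S. f S \<noteq> 0 \<Longrightarrow> degx S0 \<le> degx S"
    using ex_has_least_nat[of "\<lambda>S. f S \<noteq> 0" _ degx] by blast
  let ?A = "{S. f S \<noteq> 0 \<and> degx S \<le> degx S0}"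
  have "phi g b f S0 = (\<Sum>S\<in>?A. if S0 = S then f S else 0)"
    unfolding phi_def using f min
    by (intro sum.cong refl) (auto simp: mem_serx_iff phiO_tangent_to_x[OF g])
  also have "\<dots> = f S0" using loc_finite_le[OF serx_loc_finite[OF f]] S0 by (simp add: sum.delta')
  finally show False using z S0 by simp
qed

section \<open>The universal derivation\<close>

lemma sum_list_map_eq_1_iff:
  "(\<Sum>x\<leftarrow>xs. f x) = (1::nat) \<longleftrightarrow>
     (\<exists>j<length xs. f (xs!j) = 1 \<and> (\<forall>l<length xs. l \<noteq> j \<longrightarrow> f (xs!l) = 0))"
proof -
  have split: "(\<Sum>x\<leftarrow>xs. f x) = f (xs!j) + (\<Sum>i\<in>{..<length xs} - {j}. f (xs!i))"
    if "j < length xs" for j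
    using that by (simp add: sum_list_sum_nth atLeast0LessThan sum.remove)
  show ?thesis
  proof
    assume s: "(\<Sum>x\<leftarrow>xs. f x) = 1"
    then have "(\<Sum>i<length xs. f (xs!i)) \<noteq> 0" by (simp add: sum_list_sum_nth atLeast0LessThan)
    then obtain j where j: "j < length xs" "f (xs!j) \<noteq> 0"
      by (meson lessThan_iff sum.not_neutral_contains_not_neutral)
    with s split[OF j(1)] have "f (xs!j) = 1" "(\<Sum>i\<in>{..<length xs} - {j}. f (xs!i)) = 0"
      by linarith+
    with j(1) show "\<exists>j<length xs. f (xs!j) = 1 \<and> (\<forall>l<length xs. l \<noteq> j \<longrightarrow> f (xs!l) = 0)"
      by (intro exI[of _ j]) auto
  qed (use split in auto)
qed

lemma dser_nonzero_degy: "dser f S \<noteq> 0 \<Longrightarrow> degy S = 1"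
  by (cases S) (auto simp: dser_def degy_def split: if_splits)

lemma dser_diff: "dser (\<lambda>S. f S - g S) = (\<lambda>S. dser f S - dser g S)"
  by (rule ext) (simp add: dser_def split: option.splits)

lemma dser_oneser: "dser oneser = (\<lambda>_. 0)"
  by (rule ext) (simp add: dser_def oneser_def split: option.splits)

text \<open>The universal derivation maps a tree \<open>t\<close> to the sum of \<open>y_marks t\<close>.\<close>

definition y_marks :: "ptree \<Rightarrow> ptree set" where
  "y_marks t = {u. degyT u = 1 \<and> allX u = t}"

lemma finite_y_marks: "finite (y_marks t)"
  unfolding y_marks_def by (rule finite_subset[OF _ finite_allX_vimage[of t]]) auto

lemma y_marks_Lf_X: "y_marks (Lf X) = {Lf Y}"
proof -
  have "degyT u = 1 \<and> allX u = Lf X \<longleftrightarrow> u = Lf Y" for u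
    by (cases u) (auto split: lbl.splits if_splits)
  then show ?thesis by (auto simp: y_marks_def)
qed

lemma dser_xser: "dser xser = yser"
proof
  fix S
  have "degyT t = 1 \<and> allX t = Lf X \<longleftrightarrow> t = Lf Y" for t
    using y_marks_Lf_X by (auto simp: y_marks_def set_eq_iff)
  then show "dser xser S = yser S" by (cases S) (auto simp: dser_def yser_def xser_def)
qed

lemma degx_allX: "degyT t = 1 \<Longrightarrow> degx (Some (allX t)) = degx (Some t) + 1"
  by (simp add: degx_def degT_eq_degxT_add_degyT)

lemma loc_finite_dser:
  assumes "loc_finite f"
  shows "loc_finite (dser f)"
proof (rule loc_finiteI)
  fix n
  let ?F = "{S. f S \<noteq> 0 \<and> degx S \<le> Suc n}"
  have "{S. dser f S \<noteq> 0 \<and> degx S \<le> n} \<subseteq> Some ` (\<Union>S\<in>?F. {t. allX t = the S})"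
  proof
    fix S assume S: "S \<in> {S. dser f S \<noteq> 0 \<and> degx S \<le> n}"
    then obtain t where t: "S = Some t" "degyT t = 1" "f (Some (allX t)) \<noteq> 0"
      by (cases S) (auto simp: dser_def split: if_splits)
    then have "Some (allX t) \<in> ?F" using S degx_allX[of t] by simp
    then show "S \<in> Some ` (\<Union>S\<in>?F. {t. allX t = the S})" using t by force
  qed
  moreover have "finite (Some ` (\<Union>S\<in>?F. {t. allX t = the S}))"
    using loc_finite_le[OF assms] finite_allX_vimage by blast
  ultimately show "finite {S. dser f S \<noteq> 0 \<and> degx S \<le> n}" by (rule finite_subset)
qed

definition relabel_x :: "ptree option list \<Rightarrow> ptree option list" where
  "relabel_x ss = map (map_option allX) ss"

lemma trees_of_relabel_x: "trees_of (relabel_x ss) = map allX (trees_of ss)"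
  by (induction ss) (auto simp: relabel_x_def split: option.splits)

lemma bul_relabel_x: "bul (relabel_x ss) = map_option allX (bul ss)"
proof (cases ss rule: bul_cases)
  case (3 ts)
  then show ?thesis using trees_of_relabel_x[of ss] bul_several_trees[of "relabel_x ss" "map allX ts"] by simp
qed (simp_all add: bul_eq_trees_of trees_of_relabel_x)

lemma list_eq_if_trees_of_eq:
  "map (\<lambda>s. s = None) ss1 = map (\<lambda>s. s = None) ss2 \<Longrightarrow> trees_of ss1 = trees_of ss2 \<Longrightarrow> ss1 = ss2"
proof (induction ss1 arbitrary: ss2)
  case (Cons s1 r1)
  then obtain s2 r2 where "ss2 = s2 # r2" by (cases ss2) auto
  with Cons show ?case by (cases s1; cases s2) auto
qed simp

primrec refill :: "ptree option list \<Rightarrow> ptree list \<Rightarrow> ptree option list" where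
  "refill [] L = []"
| "refill (s # ss) L = (case s of None \<Rightarrow> None # refill ss L
     | Some _ \<Rightarrow> (case L of [] \<Rightarrow> [] | t # L' \<Rightarrow> Some t # refill ss L'))"

lemma refill_props:
  "map allX L = trees_of ss \<Longrightarrow>
   trees_of (refill ss L) = L \<and> length (refill ss L) = length ss \<and> relabel_x (refill ss L) = ss"
proof (induction ss arbitrary: L)
  case (Cons s ss)
  then show ?case by (cases s; cases L) (auto simp: relabel_x_def)
qed (simp add: relabel_x_def)

lemma inj_on_relabel_x: "inj_on relabel_x (fiber m (Some T))"
proof
  fix ss1 ss2 assume ss: "ss1 \<in> fiber m (Some T)" "ss2 \<in> fiber m (Some T)" and e: "relabel_x ss1 = relabel_x ss2"
  have "map (\<lambda>s. s = None) ss1 = map (\<lambda>s. s = None) ss2"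
    using arg_cong[OF e, of "map (\<lambda>s. s = None)"] by (simp add: relabel_x_def o_def map_option_is_None)
  moreover have "length (trees_of ss1) = length (trees_of ss2)"
    using arg_cong[OF e, of "\<lambda>ss. length (trees_of ss)"] by (simp add: trees_of_relabel_x)
  then have "trees_of ss1 = trees_of ss2"
    using ss bul_eq_SomeD[of ss1 T] bul_eq_SomeD[of ss2 T] by (auto simp: fiber_def)
  ultimately show "ss1 = ss2" by (rule list_eq_if_trees_of_eq)
qed

lemma relabel_x_fiber: "relabel_x ` fiber m (Some T) = fiber m (Some (allX T))"
proof
  show "relabel_x ` fiber m (Some T) \<subseteq> fiber m (Some (allX T))"
    by (auto simp: fiber_def bul_relabel_x) (simp add: relabel_x_def)
next
  show "fiber m (Some (allX T)) \<subseteq> relabel_x ` fiber m (Some T)"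
  proof
    fix ss' assume "ss' \<in> fiber m (Some (allX T))"
    then have b: "bul ss' = Some (allX T)" and l: "length ss' = m" by (auto simp: fiber_def)
    obtain L where L: "map allX L = trees_of ss'" "trees_of (refill ss' L) = L \<Longrightarrow> bul (refill ss' L) = Some T"
    proof (cases "trees_of ss' = [allX T]")
      case True
      then show ?thesis using that[of "[T]"] bul_singleton_tree by auto
    next
      case False
      then obtain us where us: "allX T = Nd us" "2 \<le> length us" "trees_of ss' = us"
        using bul_eq_SomeD[OF b] by auto
      then obtain ts where ts: "T = Nd ts" "map allX ts = us" by (cases T) auto
      show ?thesis
      proof (rule that[of ts])
        show "map allX ts = trees_of ss'" using ts us by simp
        show "trees_of (refill ss' ts) = ts \<Longrightarrow> bul (refill ss' ts) = Some T"
          using bul_several_trees[of "refill ss' ts" ts] ts us by auto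
      qed
    qed
    with refill_props[OF L(1)] l show "ss' \<in> relabel_x ` fiber m (Some T)"
      by (auto simp: fiber_def intro!: image_eqI[of _ _ "refill ss' L"])
  qed
qed

lemma bij_betw_relabel_x: "bij_betw relabel_x (fiber m (Some T)) (fiber m (Some (allX T)))"
  by (simp add: bij_betw_def inj_on_relabel_x relabel_x_fiber)

lemma prods_update_dser_degy:
  assumes Y: "\<And>f. f \<in> set fs \<Longrightarrow> y_free f" and j: "j < length fs"
    and nz: "prods (fs[j := dser (fs!j)]) S \<noteq> 0"
  shows "degy S = 1"
proof -
  obtain ss where ss: "ss \<in> fiber (length fs) S" "\<And>i. i < length fs \<Longrightarrow> ((fs[j := dser (fs!j)])!i) (ss!i) \<noteq> 0"
    using prods_nonzeroE[OF nz] by auto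
  have l: "length ss = length fs" using ss by (simp add: fiber_def)
  have "degy (ss!j) = 1" using ss(2)[OF j] j dser_nonzero_degy by simp
  moreover have "degy (ss!i) = 0" if "i < length ss" "i \<noteq> j" for i
    using ss(2)[of i] Y[of "fs!i"] that l by (simp add: y_free_def)
  ultimately have "(\<Sum>s\<leftarrow>ss. degy s) = 1"
    using j l unfolding sum_list_map_eq_1_iff by (intro exI[of _ j]) auto
  then show ?thesis using ss(1) degy_bul[of ss] by (simp add: fiber_def)
qed

lemma sum_update_dser_eq_relabel_x:
  assumes ss: "ss \<in> fiber (length fs) (Some T)" and T: "degyT T = 1"
  shows "(\<Sum>j<length fs. \<Prod>i<length fs. ((fs[j := dser (fs!j)])!i) (ss!i)) =
         (\<Prod>i<length fs. (fs!i) (relabel_x ss ! i))"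
proof -
  let ?m = "length fs"
  let ?tup = "\<lambda>j. \<Prod>i<?m. ((fs[j := dser (fs!j)])!i) (ss!i)"
  have l: "length ss = ?m" and b: "bul ss = Some T" using ss by (auto simp: fiber_def)
  have "(\<Sum>s\<leftarrow>ss. degy s) = 1" using degy_bul[of ss] b T by (simp add: degy_def)
  then obtain j0 where j0: "j0 < ?m" "degy (ss!j0) = 1" "\<And>l. l < ?m \<Longrightarrow> l \<noteq> j0 \<Longrightarrow> degy (ss!l) = 0"
    using l unfolding sum_list_map_eq_1_iff by auto
  have "?tup j = 0" if "j < ?m" "j \<noteq> j0" for j
  proof -
    have "dser (fs!j) (ss!j) = 0" using j0(3) that dser_nonzero_degy by fastforce
    with that show ?thesis by (intro prod_zero) (auto intro!: bexI[of _ j])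
  qed
  then have "(\<Sum>j\<in>{..<?m} - {j0}. ?tup j) = 0" by (intro sum.neutral) blast
  then have "(\<Sum>j<?m. ?tup j) = ?tup j0"
    using j0(1) sum.remove[of "{..<?m}" j0 ?tup] by simp
  also have "\<dots> = (\<Prod>i<?m. (fs!i) (relabel_x ss ! i))"
  proof (rule prod.cong[OF refl])
    fix i assume "i \<in> {..<?m}"
    moreover have "map_option allX (ss!i) = ss!i" if "i \<noteq> j0" "i < ?m"
      using j0(3)[OF that(2,1)] by (cases "ss!i") (auto simp: degy_def allX_eq_self)
    moreover obtain t where "ss!j0 = Some t" "degyT t = 1"
      using j0(2) by (cases "ss!j0") (auto simp: degy_def)
    ultimately show "((fs[j0 := dser (fs!j0)])!i) (ss!i) = (fs!i) (relabel_x ss ! i)"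
      using l by (cases "i = j0") (auto simp: relabel_x_def dser_def)
  qed
  finally show ?thesis .
qed

lemma dser_prods:
  assumes Y: "\<And>f. f \<in> set fs \<Longrightarrow> y_free f"
  shows "dser (prods fs) S = (\<Sum>j<length fs. prods (fs[j := dser (fs!j)]) S)"
proof (cases "degy S = 1")
  case False
  then have "dser (prods fs) S = 0" using dser_nonzero_degy by blast
  moreover have "prods (fs[j := dser (fs!j)]) S = 0" if "j < length fs" for j
    using prods_update_dser_degy[OF Y that] False by blast
  ultimately show ?thesis by simp
next
  case True
  then obtain T where T: "S = Some T" "degyT T = 1" by (cases S) (auto simp: degy_def)
  let ?m = "length fs"
  have "(\<Sum>j<?m. prods (fs[j := dser (fs!j)]) S) =
        (\<Sum>ss\<in>fiber ?m (Some T). \<Sum>j<?m. \<Prod>i<?m. ((fs[j := dser (fs!j)])!i) (ss!i))"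
    unfolding prods_eq_sum_fiber T by (simp add: sum.swap[of _ "{..<?m}"])
  also have "\<dots> = (\<Sum>ss\<in>fiber ?m (Some T). \<Prod>i<?m. (fs!i) (relabel_x ss ! i))"
    using sum_update_dser_eq_relabel_x T(2) by (intro sum.cong) auto
  also have "\<dots> = (\<Sum>ss\<in>fiber ?m (Some (allX T)). \<Prod>i<?m. (fs!i) (ss!i))"
    by (rule sum.reindex_bij_betw[OF bij_betw_relabel_x])
  also have "\<dots> = dser (prods fs) S"
    using T by (simp add: dser_def prods_eq_sum_fiber)
  finally show ?thesis by simp
qed

section \<open>The chain rule\<close>

lemma y_free_phiO:
  assumes "y_free a" "y_free b"
  shows "y_free (phiO a b S)"
proof -
  have "y_free (phiT a b s)" for s
  proof (induction s)
    case (Lf l) then show ?case using assms by (cases l) auto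
  next
    case (Nd ts) then show ?case by simp (intro y_free_prods, auto)
  qed
  moreover have "y_free (oneser :: 'a pser)" by (simp add: y_free_def oneser_def degy_def)
  ultimately show ?thesis by (cases S) (auto simp: phiO_def)
qed

lemma degy_phiO:
  assumes a: "y_free a" and b: "\<And>S. b S \<noteq> 0 \<Longrightarrow> degy S = 1" and nz: "phiO a b S T \<noteq> 0"
  shows "degy T = degy S"
proof -
  have "phiT a b s T \<noteq> 0 \<Longrightarrow> degy T = degyT s" for s T
  proof (induction s arbitrary: T)
    case (Lf l) then show ?case using a b by (cases l) (auto simp: y_free_def)
  next
    case (Nd ts)
    then obtain ss where ss: "ss \<in> fiber (length ts) T" "\<And>i. i < length ts \<Longrightarrow> phiT a b (ts!i) (ss!i) \<noteq> 0"
      by (auto elim: prods_nonzeroE)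
    then have "map degy ss = map degyT ts"
      using Nd.IH by (auto simp: fiber_def list_eq_iff_nth_eq)
    then show ?case using ss(1) degy_bul[of ss] by (simp add: fiber_def)
  qed
  with nz show ?thesis by (cases S) (auto simp: phiO_def degy_def oneser_def split: if_splits)
qed

lemma phi_dser_nonzero_degy:
  assumes "y_free g" "phi g (dser g) (dser f) T \<noteq> 0"
  shows "degy T = 1"
proof -
  obtain S where "dser f S \<noteq> 0" "phiO g (dser g) S T \<noteq> 0"
    using assms(2) by (auto elim: phi_nonzeroE)
  then show ?thesis using degy_phiO[OF assms(1)] dser_nonzero_degy by metis
qed

lemma mem_y_marks_NdE:
  assumes Y: "\<forall>t\<in>set ts. degyT t = 0" and w: "w \<in> y_marks (Nd ts)"
  obtains j u where "j < length ts" "u \<in> y_marks (ts!j)" "w = Nd (ts[j := u])"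
proof -
  obtain us where us: "w = Nd us" "map allX us = ts" "(\<Sum>u\<leftarrow>us. degyT u) = 1"
    using w by (cases w) (auto simp: y_marks_def)
  then obtain j where j: "j < length us" "degyT (us!j) = 1" "\<And>l. l < length us \<Longrightarrow> l \<noteq> j \<Longrightarrow> degyT (us!l) = 0"
    unfolding sum_list_map_eq_1_iff by auto
  have "us!l = ts!l" if "l < length us" "l \<noteq> j" for l
    using us(2) allX_eq_self[OF j(3)[OF that]] that(1) by auto
  then have "us = ts[j := us!j]"
    using us(2) j(1) by (intro nth_equalityI) (auto simp: nth_list_update)
  moreover have "us!j \<in> y_marks (ts!j)" using us(2) j by (auto simp: y_marks_def)
  ultimately show ?thesis using that[of j "us!j"] us(1,2) j(1) by auto
qed

lemma y_marks_Nd: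
  assumes Y: "\<forall>t\<in>set ts. degyT t = 0"
  shows "y_marks (Nd ts) = (\<Union>j<length ts. (\<lambda>u. Nd (ts[j := u])) ` y_marks (ts!j))"
proof
  show "y_marks (Nd ts) \<subseteq> (\<Union>j<length ts. (\<lambda>u. Nd (ts[j := u])) ` y_marks (ts!j))"
    by (blast elim: mem_y_marks_NdE[OF Y])
next
  show "(\<Union>j<length ts. (\<lambda>u. Nd (ts[j := u])) ` y_marks (ts!j)) \<subseteq> y_marks (Nd ts)"
  proof clarify
    fix j u assume j: "j < length ts" and u: "u \<in> y_marks (ts!j)"
    have "map allX (ts[j := u]) = ts"
      using u Y allX_eq_self by (auto simp: y_marks_def map_update map_idI)
    moreover have "(\<Sum>t\<leftarrow>ts[j := u]. degyT t) = 1"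
      unfolding sum_list_map_eq_1_iff using j u Y by (intro exI[of _ j]) (auto simp: y_marks_def nth_list_update)
    ultimately show "Nd (ts[j := u]) \<in> y_marks (Nd ts)" by (simp add: y_marks_def)
  qed
qed

lemma sum_y_marks_Nd:
  assumes Y: "\<forall>t\<in>set ts. degyT t = 0"
  shows "(\<Sum>w\<in>y_marks (Nd ts). F w) = (\<Sum>j<length ts. \<Sum>u\<in>y_marks (ts!j). F (Nd (ts[j := u])))"
proof -
  have disj: "(\<lambda>u. Nd (ts[i := u])) ` y_marks (ts!i) \<inter> (\<lambda>u. Nd (ts[j := u])) ` y_marks (ts!j) = {}"
    if "i < length ts" "j < length ts" "i \<noteq> j" for i j
  proof -
    have "u1 = ts!i" if "ts[i := u1] = ts[j := u2]" for u1 u2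
      using arg_cong[OF that, of "\<lambda>l. l!i"] \<open>i < length ts\<close> \<open>i \<noteq> j\<close> by simp
    moreover have "ts!i \<notin> y_marks (ts!i)" using Y that(1) by (simp add: y_marks_def)
    ultimately show ?thesis by blast
  qed
  have inj: "inj_on (\<lambda>u. Nd (ts[j := u])) (y_marks (ts!j))" if "j < length ts" for j
    using that by (intro inj_onI) (metis nth_list_update_eq ptree.inject(2))
  show ?thesis
    unfolding y_marks_Nd[OF Y] using disj inj finite_y_marks
    by (subst sum.UNION_disjoint) (auto simp: sum.reindex)
qed

lemma dser_phiT:
  assumes Yg: "y_free g" and "degyT s = 0"
  shows "dser (phiT g (\<lambda>_. 0) s) T = (\<Sum>u\<in>y_marks s. phiT g (dser g) u T)"
  using assms(2)
proof (induction s arbitrary: T)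
  case (Lf l)
  then show ?case by (cases l) (auto simp: y_marks_Lf_X)
next
  case (Nd ts)
  let ?z = "\<lambda>_::ptree option. 0::'a" and ?dg = "dser g"
  have Yts: "\<forall>t\<in>set ts. degyT t = 0" using Nd.prems by simp
  have "y_free (phiT g ?z t)" for t
    using y_free_phiO[OF Yg, of ?z "Some t"] by (simp add: y_free_def phiO_def)
  then have "dser (phiT g ?z (Nd ts)) T =
        (\<Sum>j<length ts. prods ((map (phiT g ?z) ts)[j := dser (phiT g ?z (ts!j))]) T)"
    using dser_prods[of "map (phiT g ?z) ts"] by auto
  also have "\<dots> = (\<Sum>j<length ts. \<Sum>u\<in>y_marks (ts!j). prods ((map (phiT g ?dg) ts)[j := phiT g ?dg u]) T)"
  proof (intro sum.cong refl)
    fix j assume j: "j \<in> {..<length ts}"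
    then have ih: "dser (phiT g ?z (ts!j)) = (\<lambda>T. \<Sum>u\<in>y_marks (ts!j). phiT g ?dg u T)"
      using Nd.IH Yts by auto
    have e: "map (phiT g ?z) ts = map (phiT g ?dg) ts"
      using Yts phiT_indep_y by (intro map_cong) blast+
    show "prods ((map (phiT g ?z) ts)[j := dser (phiT g ?z (ts!j))]) T =
      (\<Sum>u\<in>y_marks (ts!j). prods ((map (phiT g ?dg) ts)[j := phiT g ?dg u]) T)"
      unfolding ih e using j by (simp add: prods_update_sum finite_y_marks)
  qed
  also have "\<dots> = (\<Sum>w\<in>y_marks (Nd ts). phiT g ?dg w T)"
    by (simp add: sum_y_marks_Nd[OF Yts] map_update)
  finally show ?case .
qed

lemma dser_phi_eq_sum:
  assumes g: "pos_ord_x g" and f: "loc_finite f" "y_free f" and T: "degyT T = 1"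
    and A: "A = {S. f S \<noteq> 0 \<and> degx S \<le> degx (Some T) + 1} - {None}"
  shows "dser (phi g (\<lambda>_. 0) f) (Some T) = (\<Sum>S\<in>A. f S * dser (phiT g (\<lambda>_. 0) (the S)) (Some T))"
proof -
  let ?z = "\<lambda>_::ptree option. 0::'a"
  have fA: "finite A" unfolding A using loc_finite_le[OF f(1)] by auto
  have "dser (phi g ?z f) (Some T) = (\<Sum>S\<in>insert None A. f S * phiO g ?z S (Some (allX T)))"
    using T degx_allX[OF T] fA by (auto simp: dser_def A intro!: phi_eq_sum[OF g])
  also have "\<dots> = (\<Sum>S\<in>A. f S * phiO g ?z S (Some (allX T)))"
    using fA by (subst sum.insert) (auto simp: A phiO_def oneser_def)
  also have "\<dots> = (\<Sum>S\<in>A. f S * dser (phiT g ?z (the S)) (Some T))"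
    using T by (intro sum.cong refl) (auto simp: A phiO_def dser_def)
  finally show ?thesis .
qed

lemma phi_dser_eq_sum:
  assumes a: "pos_ord_x a" and f: "loc_finite f" "y_free f" and T: "degyT T = 1"
    and A: "A = {S. f S \<noteq> 0 \<and> degx S \<le> degx (Some T) + 1} - {None}"
  shows "phi a b (dser f) (Some T) = (\<Sum>S\<in>A. f S * (\<Sum>u\<in>y_marks (the S). phiT a b u (Some T)))"
proof -
  have fA: "finite A" unfolding A using loc_finite_le[OF f(1)] by auto
  have AS: "S = Some (the S)" "degyT (the S) = 0" if "S \<in> A" for S
    using that f(2) by (auto simp: A y_free_def degy_def)
  have disj: "Some ` y_marks (the S1) \<inter> Some ` y_marks (the S2) = {}"
    if "S1 \<in> A" "S2 \<in> A" "S1 \<noteq> S2" for S1 S2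
    using that AS by (auto simp: y_marks_def) metis
  have "(\<Sum>S\<in>A. f S * (\<Sum>u\<in>y_marks (the S). phiT a b u (Some T))) =
        (\<Sum>S\<in>A. \<Sum>S'\<in>Some ` y_marks (the S). dser f S' * phiO a b S' (Some T))"
  proof (intro sum.cong refl)
    fix S assume "S \<in> A"
    then have "dser f (Some u) = f S" if "u \<in> y_marks (the S)" for u
      using that AS by (auto simp: y_marks_def dser_def)
    then show "f S * (\<Sum>u\<in>y_marks (the S). phiT a b u (Some T)) =
               (\<Sum>S'\<in>Some ` y_marks (the S). dser f S' * phiO a b S' (Some T))"
      by (simp add: sum.reindex phiO_def sum_distrib_left)
  qed
  also have "\<dots> = (\<Sum>S'\<in>(\<Union>S\<in>A. Some ` y_marks (the S)). dser f S' * phiO a b S' (Some T))"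
    using fA disj finite_y_marks by (intro sum.UNION_disjoint[symmetric]) auto
  also have "\<dots> = phi a b (dser f) (Some T)"
  proof (rule phi_eq_sum[OF a, symmetric])
    show "finite (\<Union>S\<in>A. Some ` y_marks (the S))" using fA finite_y_marks by auto
    show "{S. dser f S \<noteq> 0 \<and> degx S \<le> degx (Some T)} \<subseteq> (\<Union>S\<in>A. Some ` y_marks (the S))"
    proof
      fix S' assume S': "S' \<in> {S. dser f S \<noteq> 0 \<and> degx S \<le> degx (Some T)}"
      then obtain u where u: "S' = Some u" "degyT u = 1" "f (Some (allX u)) \<noteq> 0"
        by (cases S') (auto simp: dser_def split: if_splits)
      then have "Some (allX u) \<in> A" using S' degx_allX[of u] by (auto simp: A)
      moreover have "u \<in> y_marks (the (Some (allX u)))" using u by (simp add: y_marks_def)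
      ultimately show "S' \<in> (\<Union>S\<in>A. Some ` y_marks (the S))" using u by blast
    qed
  qed
  finally show ?thesis by simp
qed

lemma dser_phi:
  assumes f: "loc_finite f" "y_free f" and g: "pos_ord_x g" "y_free g"
  shows "dser (phi g (\<lambda>_. 0) f) = phi g (dser g) (dser f)"
proof (rule ext)
  fix T'
  show "dser (phi g (\<lambda>_. 0) f) T' = phi g (dser g) (dser f) T'"
  proof (cases "degy T' = 1")
    case False
    then show ?thesis using dser_nonzero_degy phi_dser_nonzero_degy[OF g(2)] by metis
  next
    case True
    then obtain T where T: "T' = Some T" "degyT T = 1" by (cases T') (auto simp: degy_def)
    define A where "A = {S. f S \<noteq> 0 \<and> degx S \<le> degx (Some T) + 1} - {None}"
    have "\<forall>S\<in>A. degyT (the S) = 0"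
    proof
      fix S assume "S \<in> A"
      with f(2) show "degyT (the S) = 0" by (cases S) (auto simp: A_def y_free_def degy_def)
    qed
    then show ?thesis
      unfolding T dser_phi_eq_sum[OF g(1) f T(2) A_def] phi_dser_eq_sum[OF g(1) f T(2) A_def]
      using dser_phiT[OF g(2)] by simp
  qed
qed

section \<open>The exponential\<close>

definition placements :: "nat \<Rightarrow> ptree list \<Rightarrow> ptree option list set" where
  "placements k L = {ss. length ss = k \<and> trees_of ss = L}"

lemma placements_Suc: "placements (Suc k) L = (\<lambda>ss. None # ss) ` placements k L \<union>
    (case L of [] \<Rightarrow> {} | t # L' \<Rightarrow> (\<lambda>ss. Some t # ss) ` placements k L')"
proof (intro set_eqI iffI)
  fix ss assume "ss \<in> placements (Suc k) L"
  then obtain s r where ss: "ss = s # r" "length r = k" "trees_of ss = L"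
    by (auto simp: placements_def length_Suc_conv)
  then show "ss \<in> (\<lambda>ss. None # ss) ` placements k L \<union>
    (case L of [] \<Rightarrow> {} | t # L' \<Rightarrow> (\<lambda>ss. Some t # ss) ` placements k L')"
    by (cases s) (auto simp: placements_def)
next
  fix ss assume "ss \<in> (\<lambda>ss. None # ss) ` placements k L \<union>
    (case L of [] \<Rightarrow> {} | t # L' \<Rightarrow> (\<lambda>ss. Some t # ss) ` placements k L')"
  then show "ss \<in> placements (Suc k) L" by (cases L) (auto simp: placements_def)
qed

lemma finite_placements: "finite (placements k L)"
proof (rule finite_subset)
  have "s \<in> insert None (Some ` set (trees_of ss))" if "s \<in> set ss" for s ss
  proof (cases s)
    case (Some t) then show ?thesis using that Some_in_set_iff_in_trees_of[of t ss] by simp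
  qed simp
  then show "placements k L \<subseteq> {ss. set ss \<subseteq> insert None (Some ` set L) \<and> length ss = k}"
    by (auto simp: placements_def)
qed (simp add: finite_lists_length_eq)

lemma card_placements: "card (placements k L) = k choose length L"
proof (induction k arbitrary: L)
  case 0
  have "placements 0 L = (if L = [] then {[]} else {})" by (auto simp: placements_def)
  then show ?case by simp
next
  case (Suc k)
  show ?case
  proof (cases L)
    case Nil
    then show ?thesis using Suc.IH by (simp add: placements_Suc card_image)
  next
    case (Cons t L')
    have "card (placements (Suc k) L) =
          card ((\<lambda>ss. None # ss) ` placements k L) + card ((\<lambda>ss. Some t # ss) ` placements k L')"
      unfolding placements_Suc Cons list.case using finite_placements by (intro card_Un_disjoint) auto
    also have "\<dots> = Suc k choose length L"
      using Suc.IH Cons by (simp add: card_image)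
    finally show ?thesis .
  qed
qed

lemma prod_list_map_trees_of:
  assumes "E None = 1"
  shows "prod_list (map E ss) = prod_list (map (\<lambda>t. E (Some t)) (trees_of ss))"
  by (induction ss) (auto simp: assms split: option.splits)

lemma fiber_Some:
  "fiber k (Some T) = placements k [T] \<union>
     (case T of Lf _ \<Rightarrow> {} | Nd ts \<Rightarrow> if 2 \<le> length ts then placements k ts else {})"
proof (intro set_eqI iffI)
  fix ss assume "ss \<in> fiber k (Some T)"
  then show "ss \<in> placements k [T] \<union>
     (case T of Lf _ \<Rightarrow> {} | Nd ts \<Rightarrow> if 2 \<le> length ts then placements k ts else {})"
    using bul_eq_SomeD[of ss T] by (auto simp: fiber_def placements_def)
next
  fix ss assume ss: "ss \<in> placements k [T] \<union>
     (case T of Lf _ \<Rightarrow> {} | Nd ts \<Rightarrow> if 2 \<le> length ts then placements k ts else {})"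
  show "ss \<in> fiber k (Some T)"
  proof (cases "ss \<in> placements k [T]")
    case True then show ?thesis using bul_singleton_tree by (auto simp: placements_def fiber_def)
  next
    case False
    with ss obtain ts where "T = Nd ts" "2 \<le> length ts" "ss \<in> placements k ts"
      by (cases T) (auto split: if_splits)
    then show ?thesis using bul_several_trees[of ss ts] by (auto simp: placements_def fiber_def)
  qed
qed

lemma Nd_not_in_children: "ts \<noteq> [Nd ts]"
proof
  assume "ts = [Nd ts]"
  then have "size (Nd ts) = size (Nd [Nd ts])" by simp
  then show False by simp
qed

text \<open>In a \<open>k\<close>-fold product of a series with constant term 1, a tree \<open>T\<close> arises either
  from a single factor or, if \<open>T = Nd ts\<close>, by placing the children \<open>ts\<close> into \<open>length ts\<close>
  of the \<open>k\<close> factors.\<close>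

lemma prods_replicate_Some:
  fixes E :: "('a::comm_ring_1) pser"
  assumes E1: "E None = 1"
  shows "prods (replicate k E) (Some T) = of_nat k * E (Some T) +
     (case T of Lf _ \<Rightarrow> 0 | Nd ts \<Rightarrow> if 2 \<le> length ts then
        of_nat (k choose length ts) * (\<Prod>t\<leftarrow>ts. E (Some t)) else 0)"
proof -
  let ?B = "case T of Lf _ \<Rightarrow> {} | Nd ts \<Rightarrow> if 2 \<le> length ts then placements k ts else {}"
  have dis: "placements k [T] \<inter> ?B = {}"
    using Nd_not_in_children by (auto simp: placements_def split: ptree.splits)
  have prod: "prod_list (map E ss) = (\<Prod>t\<leftarrow>L. E (Some t))" if "ss \<in> placements k L" for ss L
    using that prod_list_map_trees_of[of E, OF E1] by (simp add: placements_def)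
  have "prods (replicate k E) (Some T) = (\<Sum>ss\<in>fiber k (Some T). prod_list (map E ss))"
    unfolding prods_eq_sum_fiber
    by (intro sum.cong) (auto simp: fiber_def prod.list_conv_set_nth atLeast0LessThan)
  also have "\<dots> = (\<Sum>ss\<in>placements k [T]. prod_list (map E ss)) + (\<Sum>ss\<in>?B. prod_list (map E ss))"
    unfolding fiber_Some
    by (rule sum.union_disjoint[OF finite_placements _ dis]) (simp split: ptree.split add: finite_placements)
  also have "(\<Sum>ss\<in>placements k [T]. prod_list (map E ss)) = of_nat k * E (Some T)"
    using card_placements[of k "[T]"] by (simp add: prod)
  also have "(\<Sum>ss\<in>?B. prod_list (map E ss)) = (case T of Lf _ \<Rightarrow> 0 | Nd ts \<Rightarrow>
     if 2 \<le> length ts then of_nat (k choose length ts) * (\<Prod>t\<leftarrow>ts. E (Some t)) else 0)"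
    by (cases T) (simp_all add: prod card_placements)
  finally show ?thesis .
qed

lemma prods_replicate_None: "E None = 1 \<Longrightarrow> prods (replicate k E) None = 1"
  unfolding prods_eq_sum_fiber fiber_None by simp

lemma sum_compositions_indicator:
  assumes "length ss = k"
  shows "(\<Sum>ns\<in>{ns. length ns = k \<and> sum_list ns = n}. \<Prod>j<k. if deg (ss!j) = ns!j then E (ss!j) else 0) =
         (if (\<Sum>s\<leftarrow>ss. deg s) = n then prod_list (map E ss) else (0::'a::comm_ring_1))"
proof -
  let ?I = "{ns. length ns = k \<and> sum_list ns = n}"
  have fI: "finite ?I"
    by (rule finite_subset[OF _ finite_lists_length_eq[of "{0..n}" k]])
      (auto simp: member_le_sum_list)
  have eq: "(\<Prod>j<k. if deg (ss!j) = ns!j then E (ss!j) else 0) =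
                 (if map deg ss = ns then prod_list (map E ss) else 0)" if "ns \<in> ?I" for ns
  proof (cases "map deg ss = ns")
    case True
    then show ?thesis using assms
      by (auto simp: prod.list_conv_set_nth atLeast0LessThan intro!: prod.cong)
  next
    case False
    with that assms obtain j where "j < k" "deg (ss!j) \<noteq> ns!j" by (auto simp: list_eq_iff_nth_eq)
    with False show ?thesis by (auto intro!: prod_zero)
  qed
  have "(\<Sum>ns\<in>?I. \<Prod>j<k. if deg (ss!j) = ns!j then E (ss!j) else 0) =
        (\<Sum>ns\<in>?I. if map deg ss = ns then prod_list (map E ss) else 0)"
    using eq by (rule sum.cong[OF refl])
  also have "\<dots> = (if map deg ss \<in> ?I then prod_list (map E ss) else 0)"
    using fI by (rule sum.delta')
  finally show ?thesis using assms by simp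
qed

lemma sum_prods_hpart:
  "(\<Sum>ns\<in>{ns. length ns = k \<and> sum_list ns = n}. prods (map (\<lambda>i. hpart i E) ns) S) =
   (if deg S = n then prods (replicate k E) S else (0::'a::comm_ring_1))"
proof -
  let ?I = "{ns. length ns = k \<and> sum_list ns = n}"
  have "(\<Sum>ns\<in>?I. prods (map (\<lambda>i. hpart i E) ns) S) =
        (\<Sum>ss\<in>fiber k S. \<Sum>ns\<in>?I. \<Prod>j<k. if deg (ss!j) = ns!j then E (ss!j) else 0)"
    unfolding prods_map_eq_sum_fiber by (subst sum.swap) (auto simp: hpart_def intro!: sum.cong)
  also have "\<dots> = (\<Sum>ss\<in>fiber k S. if deg S = n then prod_list (map E ss) else 0)"
    by (intro sum.cong refl) (auto simp: sum_compositions_indicator fiber_def deg_bul)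
  also have "\<dots> = (if deg S = n then prods (replicate k E) S else 0)"
    unfolding prods_eq_sum_fiber
    by (auto intro!: sum.cong simp: fiber_def prod.list_conv_set_nth atLeast0LessThan)
  finally show ?thesis .
qed

text \<open>Solving \<open>k ^ n E(T) = k E(T) + (k choose length ts) \<Prod> E(t_i)\<close> (\<open>T = Nd ts\<close> with
  \<open>n\<close> leaves, see \<open>prods_replicate_Some\<close>) for \<open>E(T)\<close>.  The denominator vanishes only for
  \<open>n = 1\<close>; then some child has no leaves and the product is 0 anyway.\<close>

fun exp_coeff :: "nat \<Rightarrow> ptree \<Rightarrow> 'a::field_char_0" where
  "exp_coeff k (Lf l) = (if l = X then 1 else 0)"
| "exp_coeff k (Nd ts) = (if 2 \<le> length ts then
     of_nat (k choose length ts) * (\<Prod>t\<leftarrow>ts. exp_coeff k t) / (of_nat k ^ degT (Nd ts) - of_nat k)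
     else 0)"

definition exp_ser :: "nat \<Rightarrow> ('a::field_char_0) pser" where
  "exp_ser k S = (case S of None \<Rightarrow> 1 | Some t \<Rightarrow> exp_coeff k t)"

lemma exp_coeff_nonzeroD: "exp_coeff k t \<noteq> (0::'a::field_char_0) \<Longrightarrow> wfT t \<and> degyT t = 0"
proof (induction t)
  case (Lf l) then show ?case by (cases l) auto
next
  case (Nd ts)
  then have "2 \<le> length ts" "\<forall>t\<in>set ts. exp_coeff k t \<noteq> (0::'a)"
    by (auto split: if_splits simp: prod_list_zero_iff)
  with Nd.IH show ?case by simp
qed

lemma exp_ser_in_serx: "exp_ser k \<in> serx"
  unfolding mem_serx_iff
proof (intro allI impI)
  fix S assume "exp_ser k S \<noteq> (0::'a)"
  then show "x_tree S" using exp_coeff_nonzeroD[of k] by (cases S) (auto simp: exp_ser_def x_tree_def)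
qed

lemma exp_ser_None [simp]: "exp_ser k None = 1"
  by (simp add: exp_ser_def)

lemma of_nat_power_neq_self:
  assumes "2 \<le> k" "2 \<le> d"
  shows "(of_nat k ^ d :: 'a::semiring_char_0) \<noteq> of_nat k"
proof -
  have "k ^ 1 < k ^ d" using assms by (intro power_strict_increasing) auto
  then show ?thesis by (metis of_nat_eq_iff of_nat_power power_one_right less_irrefl)
qed

lemma exp_coeff_Nd_equation:
  assumes k: "2 \<le> k" and l: "2 \<le> length ts"
  shows "of_nat k ^ degT (Nd ts) * exp_coeff k (Nd ts) =
         of_nat k * exp_coeff k (Nd ts) + of_nat (k choose length ts) * (\<Prod>t\<leftarrow>ts. exp_coeff k t :: 'a::field_char_0)"
proof (cases "(\<Prod>t\<leftarrow>ts. exp_coeff k t) = (0::'a)")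
  case False
  then have "\<forall>t\<in>set ts. 1 \<le> degT t"
    using exp_coeff_nonzeroD degT_ge_1 by (fastforce simp: prod_list_zero_iff)
  then have "2 \<le> degT (Nd ts)" using l length_le_sum_list_map[of ts degT] by simp
  then have "of_nat k ^ degT (Nd ts) \<noteq> (of_nat k :: 'a)" by (rule of_nat_power_neq_self[OF k])
  with l show ?thesis by (simp add: field_simps)
qed (use l in simp)

lemma prods_replicate_exp_ser:
  assumes k: "2 \<le> k"
  shows "prods (replicate k (exp_ser k)) = (\<lambda>S. of_nat k ^ deg S * (exp_ser k S :: 'a::field_char_0))"
proof
  fix S
  show "prods (replicate k (exp_ser k)) S = of_nat k ^ deg S * (exp_ser k S :: 'a)"
  proof (cases S)
    case (Some T)
    note prods = prods_replicate_Some[of "exp_ser k :: 'a pser" k T]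
    show ?thesis
    proof (cases T)
      case (Nd ts)
      show ?thesis
      proof (cases "2 \<le> length ts")
        case True
        with Some Nd prods show ?thesis
          by (simp add: exp_ser_def deg_def exp_coeff_Nd_equation[OF k True] del: exp_coeff.simps degT.simps)
      qed (use Some Nd prods in \<open>simp add: exp_ser_def\<close>)
    qed (use Some prods in \<open>simp add: exp_ser_def deg_def\<close>)
  qed (simp add: prods_replicate_None deg_def)
qed

definition is_planar_exp :: "nat \<Rightarrow> ('a::field_char_0) pser \<Rightarrow> bool" where
  "is_planar_exp k E = (E \<in> serx \<and> hpart 0 E = oneser \<and> hpart 1 E = xser \<and>
     (\<forall>n. (\<lambda>S. of_nat (k ^ n) * hpart n E S) =
          (\<lambda>S. \<Sum>is \<in> {is. length is = k \<and> sum_list is = n}. prods (map (\<lambda>i. hpart i E) is) S)))"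

lemma is_planar_exp_iff:
  "is_planar_exp k E \<longleftrightarrow> E \<in> serx \<and> hpart 0 E = oneser \<and> hpart 1 E = xser \<and>
     (\<forall>S. of_nat k ^ deg S * E S = prods (replicate k E) S)"
proof -
  have "(\<forall>n. (\<lambda>S. of_nat (k ^ n) * hpart n E S) =
          (\<lambda>S. \<Sum>is \<in> {is. length is = k \<and> sum_list is = n}. prods (map (\<lambda>i. hpart i E) is) S)) \<longleftrightarrow>
        (\<forall>S. of_nat k ^ deg S * E S = prods (replicate k E) S)"
    unfolding sum_prods_hpart by (auto simp: hpart_def fun_eq_iff)
  then show ?thesis by (simp add: is_planar_exp_def)
qed

lemma exp_coeff_degT_eq_0: "degT t = 0 \<Longrightarrow> exp_coeff k t = (0::'a::field_char_0)"
  using exp_coeff_nonzeroD[of k t] degT_ge_1[of t] by auto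

lemma exp_coeff_degT_eq_1: "degT t = 1 \<Longrightarrow> exp_coeff k t = (if t = Lf X then 1 else 0::'a::field_char_0)"
  using exp_coeff_nonzeroD[of k t] degT_Nd_ge_2 by (cases t) auto

lemma is_planar_exp_exp_ser:
  assumes "2 \<le> k"
  shows "is_planar_exp k (exp_ser k :: ('a::field_char_0) pser)"
  unfolding is_planar_exp_iff
proof (intro conjI allI)
  show "hpart 0 (exp_ser k) = (oneser :: 'a pser)"
    by (auto simp: hpart_def oneser_def exp_ser_def deg_def exp_coeff_degT_eq_0 split: option.splits)
  show "hpart 1 (exp_ser k) = (xser :: 'a pser)"
    by (auto simp: hpart_def xser_def exp_ser_def deg_def exp_coeff_degT_eq_1 split: option.splits)
qed (simp_all add: exp_ser_in_serx prods_replicate_exp_ser[OF assms])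

lemma is_planar_exp_unique:
  assumes k: "2 \<le> k" and E: "is_planar_exp k (E :: ('a::field_char_0) pser)"
  shows "E = exp_ser k"
proof -
  have h0: "hpart 0 E = oneser" and h1: "hpart 1 E = xser"
    and rec: "\<And>S. of_nat k ^ deg S * E S = prods (replicate k E) S"
    using E by (auto simp: is_planar_exp_iff)
  have E1: "E None = 1" using fun_cong[OF h0, of None] by (simp add: hpart_def deg_def oneser_def)
  have "E (Some t) = exp_coeff k t" for t
  proof (induction t)
    case (Lf l)
    then show ?case using fun_cong[OF h1, of "Some (Lf l)"] by (cases l) (auto simp: hpart_def deg_def xser_def)
  next
    case (Nd ts)
    let ?d = "degT (Nd ts)"
    show ?case
    proof (cases "?d < 2")
      case True
      then have "?d = 0 \<or> ?d = 1" by linarith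
      then show ?thesis
        using fun_cong[OF h0, of "Some (Nd ts)"] fun_cong[OF h1, of "Some (Nd ts)"]
          exp_coeff_degT_eq_0[of "Nd ts" k] exp_coeff_degT_eq_1[of "Nd ts" k]
        by (auto simp: hpart_def deg_def oneser_def xser_def)
    next
      case False
      let ?c = "if 2 \<le> length ts then of_nat (k choose length ts) * (\<Prod>t\<leftarrow>ts. exp_coeff k t) else 0 :: 'a"
      have "(\<Prod>t\<leftarrow>ts. E (Some t)) = (\<Prod>t\<leftarrow>ts. exp_coeff k t)"
        using Nd.IH by (metis map_cong)
      then have "of_nat k ^ ?d * E (Some (Nd ts)) = of_nat k * E (Some (Nd ts)) + ?c"
        using rec[of "Some (Nd ts)"] prods_replicate_Some[of E k "Nd ts", OF E1] by (simp add: deg_def)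
      moreover have "of_nat k ^ ?d \<noteq> (of_nat k :: 'a)"
        using False by (intro of_nat_power_neq_self[OF k]) simp
      ultimately have "E (Some (Nd ts)) = ?c / (of_nat k ^ ?d - of_nat k)"
        by (simp add: field_simps)
      then show ?thesis by simp
    qed
  qed
  with E1 show ?thesis by (intro ext) (simp add: exp_ser_def split: option.splits)
qed

lemma Expk_eq_exp_ser: "2 \<le> k \<Longrightarrow> Expk k = (exp_ser k :: ('a::field_char_0) pser)"
  unfolding Expk_def is_planar_exp_def[symmetric]
  by (blast intro: the_equality is_planar_exp_exp_ser is_planar_exp_unique)

section \<open>The derivative of the exponential\<close>

lemma hder_prods:
  assumes fs: "\<And>f. f \<in> set fs \<Longrightarrow> f \<in> serx"
  shows "hder b (prods fs) T = (\<Sum>j<length fs. prods (fs[j := hder b (fs!j)]) T)"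
proof -
  have fin: "\<And>f. f \<in> set (fs[j := dser (fs!j)]) \<Longrightarrow> loc_finite f" if "j < length fs" for j
    using fs that serx_loc_finite loc_finite_dser[OF serx_loc_finite[OF fs[OF nth_mem[OF that]]]]
    by (auto dest: set_update_subset_insert[THEN subsetD])
  have id: "map (phi xser b) fs = fs"
    using fs phi_xser_left by (intro map_idI) blast
  have "hder b (prods fs) T = phi xser b (\<lambda>S. \<Sum>j<length fs. prods (fs[j := dser (fs!j)]) S) T"
    unfolding hder_def using dser_prods[OF serx_y_free[OF fs]] by metis
  also have "\<dots> = (\<Sum>j<length fs. phi xser b (prods (fs[j := dser (fs!j)])) T)"
    using fin by (intro phi_sum[OF pos_ord_x_xser] loc_finite_prods) auto
  also have "\<dots> = (\<Sum>j<length fs. prods (map (phi xser b) (fs[j := dser (fs!j)])) T)"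
    using fin by (intro sum.cong refl phi_prods[OF pos_ord_x_xser]) auto
  also have "\<dots> = (\<Sum>j<length fs. prods (fs[j := hder b (fs!j)]) T)"
    by (simp add: map_update id hder_def)
  finally show ?thesis .
qed

lemma deg_phiO_xser_oneser:
  assumes "phiO xser oneser S T \<noteq> (0::'a::comm_ring_1)"
  shows "deg T + degy S = deg S"
proof -
  have "phiT xser oneser s T \<noteq> (0::'a) \<Longrightarrow> deg T + degyT s = degT s" for s T
  proof (induction s arbitrary: T)
    case (Lf l) then show ?case by (cases l) (auto simp: xser_def oneser_def deg_def split: if_splits)
  next
    case (Nd ts)
    then obtain ss where ss: "ss \<in> fiber (length ts) T" "\<And>i. i < length ts \<Longrightarrow> phiT xser oneser (ts!i) (ss!i) \<noteq> (0::'a)"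
      by (auto elim: prods_nonzeroE)
    have l: "length ss = length ts" using ss(1) by (simp add: fiber_def)
    have "(\<Sum>i<length ts. deg (ss!i) + degyT (ts!i)) = (\<Sum>i<length ts. degT (ts!i))"
      using Nd.IH ss(2) by (intro sum.cong) auto
    then have "sum_list (map deg ss) + sum_list (map degyT ts) = sum_list (map degT ts)"
      using l by (simp add: sum_list_sum_nth atLeast0LessThan sum.distrib)
    then show ?case using ss(1) deg_bul[of ss] by (simp add: fiber_def)
  qed
  with assms show ?thesis by (cases S) (auto simp: phiO_def degy_def deg_def oneser_def split: if_splits)
qed

lemma hder_oneser_scale:
  fixes E :: "('a::comm_ring_1) pser"
  assumes f: "loc_finite E"
  shows "hder oneser (\<lambda>S. c ^ deg S * E S) T = c ^ (deg T + 1) * hder oneser E T"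
proof -
  let ?A = "{S. dser E S \<noteq> 0 \<and> degx S \<le> degx T}"
  have fA: "finite ?A" using loc_finite_le[OF loc_finite_dser[OF f]] .
  have dscale: "dser (\<lambda>S. c ^ deg S * E S) S = c ^ deg S * dser E S" for S
    by (cases S) (simp_all add: dser_def deg_def)
  have "hder oneser (\<lambda>S. c ^ deg S * E S) T = (\<Sum>S\<in>?A. c ^ deg S * dser E S * phiO xser oneser S T)"
    unfolding hder_def dscale by (rule phi_eq_sum[OF pos_ord_x_xser fA]) auto
  also have "\<dots> = (\<Sum>S\<in>?A. c ^ (deg T + 1) * (dser E S * phiO xser oneser S T))"
  proof (intro sum.cong refl)
    fix S assume "S \<in> ?A"
    then have y: "degy S = 1" using dser_nonzero_degy by blast
    show "c ^ deg S * dser E S * phiO xser oneser S T = c ^ (deg T + 1) * (dser E S * phiO xser oneser S T)"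
    proof (cases "phiO xser oneser S T = (0::'a)")
      case False
      then have "deg S = deg T + 1" using deg_phiO_xser_oneser[OF False] y by simp
      then show ?thesis by (simp only: mult.assoc)
    qed simp
  qed
  also have "\<dots> = c ^ (deg T + 1) * hder oneser E T"
    unfolding hder_def sum_distrib_left[symmetric] by (subst phi_eq_sum[OF pos_ord_x_xser fA]) auto
  finally show ?thesis .
qed

lemma hder_oneser_exp_ser_None: "hder oneser (exp_ser k :: ('a::field_char_0) pser) None = 1"
proof -
  let ?E = "exp_ser k :: 'a pser"
  have "hder oneser ?E None = (\<Sum>S\<in>{Some (Lf Y)}. dser ?E S * phiO xser oneser S None)"
    unfolding hder_def
  proof (rule phi_eq_sum[OF pos_ord_x_xser], simp, rule subsetI)
    fix S assume "S \<in> {S. dser ?E S \<noteq> 0 \<and> degx S \<le> degx None}"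
    then have S: "dser ?E S \<noteq> 0" "degx S = 0" by (auto simp: degx_def)
    then obtain t where t: "S = Some t" "degyT t = 1" "exp_coeff k (allX t) \<noteq> (0::'a)"
      by (cases S) (auto simp: dser_def exp_ser_def split: if_splits)
    then have "wfT t" "degT t = 1"
      using exp_coeff_nonzeroD[OF t(3)] S(2) by (simp_all add: degx_def degT_eq_degxT_add_degyT)
    then have "t = Lf Y" using t(2) degT_Nd_ge_2 by (cases t) (fastforce split: if_splits lbl.splits)+
    then show "S \<in> {Some (Lf Y)}" using t by simp
  qed
  also have "\<dots> = 1" by (simp add: dser_def exp_ser_def phiO_def oneser_def)
  finally show ?thesis .
qed

lemma trees_of_replicate_None [simp]: "trees_of (replicate m None) = []"
  by (induction m) auto

lemma bul_replicate_None_update: "j < k \<Longrightarrow> bul ((replicate k None)[j := s]) = s"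
proof -
  assume "j < k"
  then have "trees_of ((replicate k None)[j := s]) = trees_of [s]"
  proof (induction k arbitrary: j)
    case (Suc k)
    then show ?case by (cases j) (auto split: option.split)
  qed simp
  then show ?thesis by (metis bul_cong bul_single)
qed

lemma fiber_eq_replicate_None_update:
  assumes "ss \<in> fiber k T" "j < k" "\<And>i. i < k \<Longrightarrow> i \<noteq> j \<Longrightarrow> ss!i = None"
  shows "ss = (replicate k None)[j := T]"
proof -
  have "ss = (replicate k None)[j := ss!j]"
    using assms by (intro nth_equalityI) (auto simp: fiber_def nth_list_update)
  moreover from this have "ss!j = T"
    using assms(1,2) bul_replicate_None_update[of j k "ss!j"] by (simp add: fiber_def)
  ultimately show ?thesis by simp
qed

lemma prods_replicate_update_lowest:
  assumes E: "E \<in> serx" "E None = 1" and j: "j < k"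
    and D: "D None = 0" "\<And>S. D S \<noteq> 0 \<Longrightarrow> deg T0 \<le> deg S"
  shows "prods ((replicate k E)[j := D]) T0 = D T0"
proof -
  define ss0 where "ss0 = (replicate k None)[j := T0]"
  let ?P = "\<lambda>ss. \<Prod>i<k. (((replicate k E)[j := D]) ! i) (ss ! i)"
  have P: "?P ss = D (ss!j) * (\<Prod>i\<in>{..<k} - {j}. E (ss!i))" for ss
    using prod_lessThan_update[of j "replicate k E" D ss] j by simp
  have ss0: "ss0 \<in> fiber k T0" using j by (simp add: fiber_def ss0_def bul_replicate_None_update)
  have "?P ss0 = D T0" using j E(2) by (simp add: P ss0_def)
  moreover have "?P ss = 0" if ss: "ss \<in> fiber k T0" "ss \<noteq> ss0" for ss
  proof (rule ccontr)
    assume nz: "?P ss \<noteq> 0"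
    then have Dj: "D (ss!j) \<noteq> 0" unfolding P by auto
    have Ei: "E (ss!i) \<noteq> 0" if "i < k" "i \<noteq> j" for i
    proof
      assume "E (ss!i) = 0"
      with that have "(\<Prod>i\<in>{..<k} - {j}. E (ss!i)) = 0" by (intro prod_zero) auto
      with nz show False unfolding P by simp
    qed
    have l: "length ss = k" and b: "bul ss = T0" using ss(1) by (auto simp: fiber_def)
    have "deg (ss!j) + (\<Sum>i\<in>{..<k} - {j}. deg (ss!i)) = deg T0"
      using j l b deg_bul[of ss] by (simp add: sum_list_sum_nth atLeast0LessThan sum.remove)
    with D(2)[OF Dj] have "(\<Sum>i\<in>{..<k} - {j}. deg (ss!i)) = 0" by linarith
    then have "deg (ss!i) = 0" if "i < k" "i \<noteq> j" for i
      using that by simp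
    moreover have "x_tree (ss!i)" if "i < k" "i \<noteq> j" for i
      using Ei[OF that] E(1) by (simp add: mem_serx_iff)
    ultimately have "ss!i = None" if "i < k" "i \<noteq> j" for i
      using that x_tree_deg_ge_1 by fastforce
    then have "ss = ss0" unfolding ss0_def by (rule fiber_eq_replicate_None_update[OF ss(1) j])
    with ss(2) show False ..
  qed
  ultimately show ?thesis
    unfolding prods_eq_sum_fiber using ss0 by (simp add: sum.remove[OF finite_fiber ss0] sum.neutral)
qed

text \<open>At a tree \<open>T0\<close> of least degree in the support of \<open>D\<close>, the right-hand side of the
  linearized equation reduces to \<open>k D(T0)\<close> by the previous lemma, while the left-hand side
  is \<open>k ^ (deg T0 + 1) D(T0)\<close>.\<close>

lemma linearized_power_equation_unique:
  assumes k: "2 \<le> k" and E: "E \<in> serx" "E None = 1" and D: "D \<in> serx" "D None = 0"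
    and eq: "\<And>T. of_nat k ^ (deg T + 1) * D T = (\<Sum>j<k. prods ((replicate k E)[j := D]) T)"
  shows "D = (\<lambda>_. 0 :: 'a::field_char_0)"
proof (rule ccontr)
  assume "D \<noteq> (\<lambda>_. 0)"
  then obtain T0 where T0: "D T0 \<noteq> 0" and min: "\<And>S. D S \<noteq> 0 \<Longrightarrow> deg T0 \<le> deg S"
    using ex_has_least_nat[of "\<lambda>S. D S \<noteq> 0" _ deg] by blast
  have "T0 \<noteq> None" using T0 D(2) by (cases T0) auto
  with D(1) T0 have "1 \<le> deg T0"
    using degT_ge_1 by (auto simp: mem_serx_iff x_tree_def deg_def split: option.splits)
  then have ne: "of_nat k ^ (deg T0 + 1) \<noteq> (of_nat k :: 'a)"
    by (intro of_nat_power_neq_self[OF k]) simp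
  have "of_nat k ^ (deg T0 + 1) * D T0 = of_nat k * D T0"
    using eq[of T0] prods_replicate_update_lowest[of E _ k D T0, OF E _ D(2) min] by simp
  with ne T0 show False by simp
qed

lemma hder_oneser_exp_ser_equation:
  assumes k: "2 \<le> k"
  shows "of_nat k ^ (deg T + 1) * hder oneser (exp_ser k) T =
         (\<Sum>j<k. prods ((replicate k (exp_ser k))[j := hder oneser (exp_ser k)]) T :: 'a::field_char_0)"
proof -
  let ?E = "exp_ser k :: 'a pser"
  let ?r = "replicate k ?E"
  have "of_nat k ^ (deg T + 1) * hder oneser ?E T = hder oneser (\<lambda>S. of_nat k ^ deg S * ?E S) T"
    by (rule hder_oneser_scale[OF serx_loc_finite[OF exp_ser_in_serx], symmetric])
  also have "\<dots> = hder oneser (prods ?r) T"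
    unfolding prods_replicate_exp_ser[OF k] ..
  also have "\<dots> = (\<Sum>j<length ?r. prods (?r[j := hder oneser (?r!j)]) T)"
    using exp_ser_in_serx by (intro hder_prods) auto
  also have "\<dots> = (\<Sum>j<k. prods (?r[j := hder oneser ?E]) T)"
    by (intro sum.cong) auto
  finally show ?thesis .
qed

lemma sum_prods_replicate_update_self:
  "(\<Sum>j<k. prods ((replicate k E)[j := E]) T) = of_nat k * prods (replicate k E) T"
proof -
  have "(replicate k E)[j := E] = replicate k E" for j
    by (cases "j < k") (simp_all add: list_update_same_conv list_update_beyond)
  then show ?thesis by simp
qed

lemma hder_oneser_exp_ser:
  assumes k: "2 \<le> k"
  shows "hder oneser (exp_ser k) = (exp_ser k :: ('a::field_char_0) pser)"
proof -
  let ?E = "exp_ser k :: 'a pser" and ?G = "hder oneser (exp_ser k) :: 'a pser"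
  let ?r = "replicate k ?E"
  have G: "?G \<in> serx" unfolding hder_def by (intro serx_phi xser_in_serx oneser_in_serx)
  have "of_nat k ^ (deg T + 1) * (?G T - ?E T) = (\<Sum>j<k. prods (?r[j := \<lambda>S. ?G S - ?E S]) T)" for T
  proof -
    have "(\<Sum>j<k. prods (?r[j := \<lambda>S. ?G S - ?E S]) T) =
          (\<Sum>j<k. prods (?r[j := ?G]) T) - (\<Sum>j<k. prods (?r[j := ?E]) T)"
      by (simp add: prods_update_diff sum_subtractf)
    also have "\<dots> = of_nat k ^ (deg T + 1) * ?G T - of_nat k ^ (deg T + 1) * ?E T"
      unfolding hder_oneser_exp_ser_equation[OF k] sum_prods_replicate_update_self
        prods_replicate_exp_ser[OF k] by simp
    finally show ?thesis by (simp only: right_diff_distrib)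
  qed
  then have "(\<lambda>S. ?G S - ?E S) = (\<lambda>_. 0)"
    by (intro linearized_power_equation_unique[OF k exp_ser_in_serx exp_ser_None serx_diff[OF G exp_ser_in_serx]])
      (simp_all add: hder_oneser_exp_ser_None)
  then show ?thesis by (simp add: fun_eq_iff)
qed

section \<open>Compositional inverses and the logarithm\<close>

text \<open>The coefficients of the compositional inverse, determined degree by degree: by
  triangularity the coefficient of \<open>T\<close> in \<open>phi g 0 L\<close> is \<open>L T\<close> plus contributions of trees
  of smaller degree.\<close>

function inv_ser :: "('a::comm_ring_1) pser \<Rightarrow> 'a pser" where
  "inv_ser g T = (if T \<noteq> None \<and> x_tree T then
     xser T - (\<Sum>S\<in>{S. S \<noteq> None \<and> x_tree S \<and> deg S < deg T}. inv_ser g S * phiO g (\<lambda>_. 0) S T)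
   else 0)"
  by auto
termination by (relation "measure (\<lambda>(g, T). deg T)") auto

declare inv_ser.simps [simp del]

lemma finite_x_trees_deg_le: "finite {S. x_tree S \<and> deg S \<le> n}"
proof (rule finite_subset)
  show "{S. x_tree S \<and> deg S \<le> n} \<subseteq> insert None (Some ` (\<Union>j\<le>n. {t. wfT t \<and> degT t = j}))"
  proof
    fix S assume "S \<in> {S. x_tree S \<and> deg S \<le> n}"
    then show "S \<in> insert None (Some ` (\<Union>j\<le>n. {t. wfT t \<and> degT t = j}))"
      by (cases S) (auto simp: x_tree_def deg_def)
  qed
qed (auto intro: finite_wfT_degT)

lemma inv_ser_in_serx: "inv_ser g \<in> serx"
  unfolding mem_serx_iff by (subst inv_ser.simps) auto

lemma inv_ser_None [simp]: "inv_ser g None = 0"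
  by (simp add: inv_ser.simps)

lemma inv_ser_nonzeroD: "inv_ser g S \<noteq> 0 \<Longrightarrow> S \<noteq> None \<and> x_tree S"
  using inv_ser_in_serx[of g] by (cases S) (auto simp: mem_serx_iff)

lemma phi_inv_ser_at_x_tree:
  assumes g: "tangent_to_x g" and T: "T \<noteq> None" "x_tree T"
  shows "phi g (\<lambda>_. 0) (inv_ser g) T = xser T"
proof -
  let ?L = "inv_ser g" and ?z = "\<lambda>_::ptree option. 0"
  let ?A = "{S. S \<noteq> None \<and> x_tree S \<and> deg S \<le> deg T}"
  let ?W = "{S. S \<noteq> None \<and> x_tree S \<and> deg S < deg T}"
  have fA: "finite ?A" by (rule finite_subset[OF _ finite_x_trees_deg_le[of "deg T"]]) auto
  have fW: "finite ?W" by (rule finite_subset[OF _ fA]) auto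
  have "phi g ?z ?L T = (\<Sum>S\<in>?A. ?L S * phiO g ?z S T)"
  proof (rule phi_eq_sum[OF _ fA])
    show "pos_ord_x g" using g by (rule tangent_to_x_pos_ord_x)
    show "{S. ?L S \<noteq> 0 \<and> degx S \<le> degx T} \<subseteq> ?A"
    proof
      fix S assume S: "S \<in> {S. ?L S \<noteq> 0 \<and> degx S \<le> degx T}"
      then have "S \<noteq> None" "x_tree S" using inv_ser_nonzeroD by auto
      with S T(2) show "S \<in> ?A" by (simp add: x_tree_degx_eq_deg)
    qed
  qed
  also have "\<dots> = (\<Sum>S\<in>insert T ?W. ?L S * phiO g ?z S T)"
  proof (rule sum.mono_neutral_right[OF fA])
    show "insert T ?W \<subseteq> ?A" using T by auto
    show "\<forall>S\<in>?A - insert T ?W. ?L S * phiO g ?z S T = 0"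
    proof
      fix S assume S: "S \<in> ?A - insert T ?W"
      then have "degx T \<le> degx S" using T(2) by (auto simp: x_tree_degx_eq_deg)
      with S show "?L S * phiO g ?z S T = 0" using phiO_tangent_to_x[OF g, of S T] by auto
    qed
  qed
  also have "\<dots> = ?L T + (\<Sum>S\<in>?W. ?L S * phiO g ?z S T)"
    using fW phiO_tangent_to_x[OF g T(2)] by (subst sum.insert) auto
  also have "\<dots> = xser T"
    using T by (subst (1) inv_ser.simps) simp
  finally show ?thesis .
qed

lemma phi_inv_ser:
  assumes g: "tangent_to_x g" "g \<in> serx"
  shows "phi g (\<lambda>_. 0) (inv_ser g) = xser"
proof (rule ext)
  fix T
  let ?L = "inv_ser g" and ?z = "\<lambda>_::ptree option. 0"
  consider "T = None" | "T \<noteq> None" "\<not> x_tree T" | "T \<noteq> None" "x_tree T" by blast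
  then show "phi g ?z ?L T = xser T"
  proof cases
    case 1
    have "\<not> degx S \<le> degx T" if "?L S \<noteq> 0" for S
      using inv_ser_nonzeroD[OF that] x_tree_deg_ge_1[of S] x_tree_degx_eq_deg[of S] 1 by (simp add: degx_def)
    then have "{S. ?L S \<noteq> 0 \<and> degx S \<le> degx T} = {}" by blast
    then show ?thesis using 1 unfolding phi_def by (simp only:) (simp add: xser_def)
  next
    case 2
    then have "phiO g ?z S T = 0" for S
      using serx_phiO[OF g(2), of ?z S] by (auto simp: mem_serx_iff)
    moreover have "xser T = 0" using 2 by (auto simp: xser_def x_tree_def)
    ultimately show ?thesis by (simp add: phi_def)
  qed (rule phi_inv_ser_at_x_tree[OF g(1)])
qed

lemma inv_ser_unique:
  assumes g: "tangent_to_x g" "g \<in> serx" and h: "h \<in> serx" "phi g (\<lambda>_. 0) h = xser"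
  shows "h = inv_ser g"
proof -
  have pg: "pos_ord_x g" using g(1) by (rule tangent_to_x_pos_ord_x)
  have "phi g (\<lambda>_. 0) (\<lambda>S. h S - inv_ser g S) T = 0" for T
    using phi_diff[OF pg serx_loc_finite[OF h(1)] serx_loc_finite[OF inv_ser_in_serx], where b = "\<lambda>_. 0" and T = T]
    by (simp add: phi_inv_ser[OF g] h(2))
  then have "phi g (\<lambda>_. 0) (\<lambda>S. h S - inv_ser g S) = (\<lambda>_. 0)" ..
  then have "(\<lambda>S. h S - inv_ser g S) = (\<lambda>_. 0)"
    by (rule phi_tangent_to_x_injective[OF g(1) serx_diff[OF h(1) inv_ser_in_serx]])
  then show ?thesis by (simp add: fun_eq_iff)
qed

lemma tangent_to_xI:
  assumes "g \<in> serx" "g None = 0" "g (Some (Lf X)) = 1"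
  shows "tangent_to_x g"
proof -
  have two: "2 \<le> degx S" if "g S \<noteq> 0" "S \<noteq> Some (Lf X)" for S
  proof -
    have "x_tree S" using that(1) assms(1) by (simp add: mem_serx_iff)
    moreover have "S \<noteq> None" using that(1) assms(2) by (cases S) auto
    ultimately obtain t where t: "S = Some t" "wfT t" "degyT t = 0" by (cases S) (auto simp: x_tree_def)
    then have "t \<noteq> Lf X" "t \<noteq> Lf Y" using that by auto
    then obtain ts where "t = Nd ts" by (metis lbl.exhaust ptree.exhaust)
    then have "2 \<le> degT t" using t(2) degT_Nd_ge_2 by simp
    with t show ?thesis by (simp add: degx_def degT_eq_degxT_add_degyT)
  qed
  moreover have "1 \<le> degx S" if "g S \<noteq> 0" for S
  proof (cases "S = Some (Lf X)")
    case False
    with two[OF that] show ?thesis by simp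
  qed (simp add: degx_def)
  ultimately show ?thesis
    using assms serx_loc_finite by (auto simp: tangent_to_x_def pos_ord_x_def)
qed

lemma exp_ser_minus_one_in_serx: "(\<lambda>S. exp_ser k S - oneser S) \<in> serx"
  by (intro serx_diff exp_ser_in_serx oneser_in_serx)

lemma tangent_to_x_exp_ser_minus_one: "tangent_to_x (\<lambda>S. exp_ser k S - oneser S)"
  by (intro tangent_to_xI exp_ser_minus_one_in_serx) (simp_all add: exp_ser_def oneser_def)

lemma Logk_eq_inv_ser:
  assumes "2 \<le> k"
  shows "Logk k = inv_ser (\<lambda>S. exp_ser k S - oneser S :: 'a::field_char_0)"
proof -
  let ?g = "\<lambda>S. exp_ser k S - oneser S :: 'a"
  have g: "tangent_to_x ?g" "?g \<in> serx"
    by (rule tangent_to_x_exp_ser_minus_one, rule exp_ser_minus_one_in_serx)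
  have "(THE h. h \<in> serx \<and> h None = 0 \<and> subst h ?g = xser) = inv_ser ?g"
    using phi_inv_ser[OF g] inv_ser_unique[OF g] inv_ser_in_serx
    by (intro the_equality) (auto simp: subst_def)
  then show ?thesis by (simp add: Logk_def Expk_eq_exp_ser[OF assms])
qed

section \<open>The derivative of the logarithm\<close>

lemma hder_inv_ser:
  assumes g: "tangent_to_x g" "g \<in> serx" and h: "h \<in> serx" "phi g (\<lambda>_. 0) h = hder oneser g"
  shows "hder h (inv_ser g) = oneser"
proof -
  let ?L = "inv_ser g" and ?z = "\<lambda>_::ptree option. 0"
  have pg: "pos_ord_x g" using g(1) by (rule tangent_to_x_pos_ord_x)
  have fg: "loc_finite g" and fh: "loc_finite h" using g(2) h(1) by (simp_all add: serx_loc_finite)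
  have fdL: "loc_finite (dser ?L)" by (intro loc_finite_dser serx_loc_finite inv_ser_in_serx)
  have "phi g ?z (hder h ?L) = phi g (hder oneser g) (dser ?L)"
    unfolding hder_def phi_phi[OF pg loc_finite_zero pos_ord_x_xser fh fdL] phi_xser[OF pg] h(2) ..
  also have "\<dots> = phi xser oneser (phi g (dser g) (dser ?L))"
    unfolding hder_def phi_phi[OF pos_ord_x_xser loc_finite_oneser pg loc_finite_dser[OF fg] fdL]
      phi_xser_left[OF g(2)] ..
  also have "phi g (dser g) (dser ?L) = yser"
    using dser_phi[OF serx_loc_finite serx_y_free, OF inv_ser_in_serx[of g] inv_ser_in_serx[of g] pg
        serx_y_free[OF g(2)]]
    by (simp add: phi_inv_ser[OF g] dser_xser)
  also have "phi xser oneser yser = oneser" by (rule phi_yser[OF pos_ord_x_xser])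
  also have "oneser = phi g ?z oneser" by (rule phi_oneser[OF pg, symmetric])
  finally have z: "phi g ?z (\<lambda>S. hder h ?L S - oneser S) = (\<lambda>_. 0)"
    using phi_diff[OF pg _ loc_finite_oneser] loc_finite_phi[OF pos_ord_x_xser fh fdL]
    by (auto simp: hder_def)
  have "(\<lambda>S. hder h ?L S - oneser S) \<in> serx"
    unfolding hder_def by (intro serx_diff serx_phi xser_in_serx h(1) oneser_in_serx)
  then have "(\<lambda>S. hder h ?L S - oneser S) = (\<lambda>_. 0)"
    using z by (rule phi_tangent_to_x_injective[OF g(1)])
  then show ?thesis by (simp add: fun_eq_iff)
qed

theorem proposition7p2:
  fixes k :: nat
  assumes "k \<ge> 2"
  shows "hder (\<lambda>S. oneser S + xser S) (Logk k :: ('a::field_char_0) pser) = oneser"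
proof -
  let ?g = "\<lambda>S. exp_ser k S - oneser S :: 'a"
  have pg: "pos_ord_x ?g" by (rule tangent_to_x_pos_ord_x[OF tangent_to_x_exp_ser_minus_one])
  have "phi ?g (\<lambda>_. 0) (\<lambda>S. oneser S + xser S) = exp_ser k"
    using phi_add[OF pg loc_finite_oneser loc_finite_xser] by (simp add: phi_oneser phi_xser pg fun_eq_iff)
  also have "\<dots> = hder oneser ?g"
    using hder_oneser_exp_ser[OF assms, where 'a = 'a] by (simp add: hder_def dser_diff dser_oneser)
  finally show ?thesis
    unfolding Logk_eq_inv_ser[OF assms]
    by (intro hder_inv_ser tangent_to_x_exp_ser_minus_one exp_ser_minus_one_in_serx
        serx_add oneser_in_serx xser_in_serx)
qed

end
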